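(* Let $d\ge2$, let $a$ be an i.i.d. conductivity function on $\mathbb{Z}^d$, $T>0$, $\xi\in\mathbb{R}^d$ with $|\xi|=1$, and let $G_T$ and $\phi_T$ be the associated Green's function and approximate corrector. Then for every edge $e=[z,z+e_i]$ and every $x\in\mathbb{Z}^d$, \[ \frac{\partial\phi_T(x;a)}{\partial a(e)}=-\big(\nabla_i\phi_T(z;a)+\xi_i\big)\nabla_{z_i}G_T(z,x;a), \] and for all $n\in\mathbb{N}$, \[ \sup_{a(e)}\Big|\frac{\partial}{\partial a(e)}\big[\phi_T(x;a)^{n+1}\big]\Big|\lesssim|\phi_T(x;a)|^n\big(|\nabla_i\phi_T(z;a)|+1\big)|\nabla_{z_i}G_T(z,x;a)|+\big(|\nabla_i\phi_T(z;a)|+1\big)^{n+1}|\nabla_{z_i}G_T(z,x;a)|^{n+1}. \] In addition, \[ \sup_{a(e)}|\nabla_i\phi_T(z;a)|\lesssim|\nabla_i\phi_T(z;a)|+1. \] The multiplicative constant in the second estimate depends on $n$ in addition to $\alpha,\beta,d$.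
   Context: A conductivity function on $\mathbb{Z}^d$ is $a:\mathbb{Z}^d\times\mathbb{Z}^d\to\mathbb{R}^+$ with $a(x,y)=0$ if $|x-y|\ne1$ and $a(x,y)=a(y,x)\in[\alpha,\beta]$ if $|x-y|=1$, $0<\alpha\le\beta$; $a(e)$ denotes its value on the edge $e$; i.i.d. means the edge values are independent identically distributed. With $e_1,\dots,e_d$ the canonical basis: $\nabla u(x)=(u(x+e_i)-u(x))_i$, $\nabla^*u(x)=(u(x)-u(x-e_i))_i$, $\nabla^*\cdot g=\sum_i\nabla^*_ig_i$, $A(x)=\operatorname{diag}(a(x,x+e_1),\dots,a(x,x+e_d))$. The Green's function $G_T(\cdot,y;a)$ is the unique solution in $L^2(\mathbb{Z}^d)$ of $\sum_xT^{-1}G_T(x,y)v(x)+\sum_x\nabla v(x)\cdot A(x)\nabla_xG_T(x,y)=v(y)$ for all $v\in L^2(\mathbb{Z}^d)$; $\nabla_{z_i}G_T(z,x)=G_T(z+e_i,x)-G_T(z,x)$. The approximate corrector $\phi_T$ is the unique stationary random function with $T^{-1}\phi_T-\nabla^*\cdot A(\nabla\phi_T+\xi)=0$ and $\langle\phi_T\rangle=0$. $\sup_{a(e)}$ is the supremum over the value $a(e)\in[\alpha,\beta]$ with all other coefficients fixed. $X\lesssim Y$ means $X\le CY$ with $C$ depending only on $d,\alpha,\beta$ (unless stated otherwise). *)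

theory Defs
  imports "HOL-Analysis.Analysis"
begin

text \<open>Sites of the lattice Z^d are vectors int^'d (d = CARD('d)).
  A conductivity is encoded by its values on the edges [z, z+e_i]:
  a z i = a(z, z+e_i). Symmetry a(x,y)=a(y,x) is built into this encoding.\<close>

type_synonym 'd site = "int ^ 'd"
type_synonym 'd cond = "'d site \<Rightarrow> 'd \<Rightarrow> real"

definition unitv :: "'d::finite \<Rightarrow> int ^ 'd" where
  "unitv i = axis i 1"

definition grad :: "('d::finite site \<Rightarrow> real) \<Rightarrow> 'd site \<Rightarrow> 'd \<Rightarrow> real" where
  "grad u x i = u (x + unitv i) - u x"

definition divstar :: "('d::finite site \<Rightarrow> 'd \<Rightarrow> real) \<Rightarrow> 'd site \<Rightarrow> real" where
  "divstar g x = (\<Sum>i\<in>UNIV. g x i - g (x - unitv i) i)"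

definition conductivity :: "real \<Rightarrow> real \<Rightarrow> 'd::finite cond \<Rightarrow> bool" where
  "conductivity \<alpha> \<beta> a \<longleftrightarrow> (\<forall>z i. \<alpha> \<le> a z i \<and> a z i \<le> \<beta>)"

definition cond_upd :: "'d::finite cond \<Rightarrow> 'd site \<Rightarrow> 'd \<Rightarrow> real \<Rightarrow> 'd cond" where
  "cond_upd a z i t = a(z := (a z)(i := t))"

definition green_eq :: "real \<Rightarrow> 'd::finite cond \<Rightarrow> 'd site \<Rightarrow> ('d site \<Rightarrow> real) \<Rightarrow> bool" where
  "green_eq T a y G \<longleftrightarrow>
     (\<lambda>x. (G x)\<^sup>2) summable_on UNIV \<and>
     (\<forall>v. (\<lambda>x. (v x)\<^sup>2) summable_on UNIV \<longrightarrow>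
        (\<Sum>\<^sub>\<infinity>x. G x * v x / T) + (\<Sum>\<^sub>\<infinity>x. (\<Sum>i\<in>UNIV. grad v x i * a x i * grad G x i)) = v y)"

text \<open>green T a x y = G_T(x,y;a).\<close>
definition green :: "real \<Rightarrow> 'd::finite cond \<Rightarrow> 'd site \<Rightarrow> 'd site \<Rightarrow> real" where
  "green T a x y = (THE G. green_eq T a y G) x"

definition corr_eq :: "real \<Rightarrow> 'd::finite cond \<Rightarrow> real ^ 'd \<Rightarrow> ('d site \<Rightarrow> real) \<Rightarrow> bool" where
  "corr_eq T a \<xi> \<phi> \<longleftrightarrow> bounded (range \<phi>) \<and>
     (\<forall>x. \<phi> x / T - divstar (\<lambda>y i. a y i * (grad \<phi> y i + \<xi> $ i)) x = 0)"

definition corrector :: "real \<Rightarrow> 'd::finite cond \<Rightarrow> real ^ 'd \<Rightarrow> 'd site \<Rightarrow> real" where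
  "corrector T a \<xi> = (THE \<phi>. corr_eq T a \<xi> \<phi>)"

end

theory Submission
  imports Defs
begin

text \<open>Both the corrector and the Green's function solve equations for the massive operator
  \<open>L u = u/T - \<nabla>\<^sup>* \<cdot> A \<nabla>u\<close>, which obeys a maximum principle on bounded functions and is
  solvable there by a contraction argument. Changing the single conductivity \<open>a(e)\<close> to \<open>s\<close>
  perturbs \<open>L\<close> by a rank-one operator, so the perturbed corrector is
  \<open>\<phi>\<^sub>s = \<phi> - (s - a(e)) (\<nabla>\<^sub>i\<phi>\<^sub>s(z) + \<xi>\<^sub>i) \<nabla>\<^sub>z\<^sub>iG(z, \<cdot>)\<close>. Taking \<open>\<nabla>\<^sub>i\<close> at \<open>z\<close> gives
  \<open>\<nabla>\<^sub>i\<phi>\<^sub>s(z) + \<xi>\<^sub>i = (\<nabla>\<^sub>i\<phi>(z) + \<xi>\<^sub>i) / (1 + (s - a(e)) D)\<close> with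
  \<open>D = \<nabla>\<^sub>z\<^sub>i\<nabla>\<^sub>z\<^sub>iG(z,z)\<close>, and the energy identity for \<open>\<nabla>\<^sub>z\<^sub>iG(z, \<cdot>)\<close> gives
  \<open>0 \<le> a(e) D \<le> 1\<close>, so the denominator stays above \<open>\<alpha>/\<beta>\<close> for \<open>s \<in> [\<alpha>, \<beta>]\<close>.
  Everything is then an explicit rational function of \<open>s\<close>.\<close>

definition massive_op :: "real \<Rightarrow> 'd::finite cond \<Rightarrow> ('d site \<Rightarrow> real) \<Rightarrow> 'd site \<Rightarrow> real" where
  "massive_op T a u x = u x / T - divstar (\<lambda>y j. a y j * grad u y j) x"

lemma massive_op_expand:
  "massive_op T a u x = u x / T
     - (\<Sum>j\<in>UNIV. a x j * (u (x + unitv j) - u x) - a (x - unitv j) j * (u x - u (x - unitv j)))"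
  by (simp add: massive_op_def divstar_def grad_def)

lemma massive_op_lincomb:
  "massive_op T a (\<lambda>x. c1 * u x + c2 * v x) x = c1 * massive_op T a u x + c2 * massive_op T a v x"
  unfolding massive_op_expand
  by (simp add: algebra_simps sum_distrib_left sum.distrib sum_subtractf diff_divide_distrib add_divide_distrib)

lemma massive_op_diff:
  "massive_op T a (\<lambda>x. u x - v x) x = massive_op T a u x - massive_op T a v x"
  using massive_op_lincomb[of T a 1 u "-1" v x] by simp

lemma massive_op_scale: "massive_op T a (\<lambda>x. c * u x) x = c * massive_op T a u x"
  using massive_op_lincomb[of T a c u 0 u x] by simp

lemma massive_op_uminus: "massive_op T a (\<lambda>x. - u x) x = - massive_op T a u x"
  using massive_op_scale[of T a "-1" u x] by simp

lemma massive_op_zero: "massive_op T a (\<lambda>_. 0) x = 0"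
  by (simp add: massive_op_expand)

lemma bounded_range_real_iff: "bounded (range (u::'a \<Rightarrow> real)) \<longleftrightarrow> (\<exists>K. \<forall>x. \<bar>u x\<bar> \<le> K)"
  by (auto simp: bounded_iff)

lemma bounded_range_diff:
  fixes u v :: "'a \<Rightarrow> real"
  assumes "bounded (range u)" "bounded (range v)"
  shows "bounded (range (\<lambda>x. u x - v x))"
  using assms by (auto simp: bounded_range_real_iff) (metis abs_triangle_ineq4 add_mono order_trans)

text \<open>Since a bounded function need not attain its infimum, the argument runs at a point where
  \<open>u\<close> is within \<open>\<epsilon>\<close> of it, with \<open>\<epsilon>\<close> small enough that the massive term wins.\<close>

lemma massive_op_nonneg_imp_nonneg:
  fixes a :: "'d::finite cond"
  assumes T: "T > 0" and a: "\<And>y j. 0 \<le> a y j \<and> a y j \<le> B"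
    and ub: "bounded (range u)" and L: "\<And>x. massive_op T a u x \<ge> 0"
  shows "u x \<ge> 0"
proof (rule ccontr)
  assume neg: "\<not> u x \<ge> 0"
  from ub obtain K where K: "\<And>y. \<bar>u y\<bar> \<le> K" by (auto simp: bounded_range_real_iff)
  define m where "m = Inf (range u)"
  have bdd: "bdd_below (range u)"
    using K by (intro bdd_belowI[of _ "-K"]) (metis abs_le_iff minus_le_iff rangeE)
  have mle: "\<And>y. m \<le> u y" unfolding m_def using bdd by (simp add: cInf_lower)
  have mneg: "m < 0" using mle[of x] neg by simp
  have B0: "B \<ge> 0" using a[of x undefined] by (metis order_trans)
  define d where "d = real CARD('d)"
  define \<epsilon> where "\<epsilon> = - m / (2 * (1 + 2 * d * B * T))"
  have den: "1 + 2 * d * B * T > 0" using B0 T by (simp add: d_def add_pos_nonneg)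
  have epos: "\<epsilon> > 0" unfolding \<epsilon>_def using mneg den by (intro divide_pos_pos) auto
  have "\<exists>y\<in>range u. y < m + \<epsilon>"
    using epos bdd unfolding m_def by (meson UNIV_not_empty cInf_less_iff image_is_empty less_add_same_cancel1)
  then obtain x0 where x0: "u x0 < m + \<epsilon>" by auto
  have flux: "a x0 j * (u (x0 + unitv j) - u x0) - a (x0 - unitv j) j * (u x0 - u (x0 - unitv j))
      \<ge> - 2 * B * \<epsilon>" for j
  proof -
    have h1: "u (x0 + unitv j) - u x0 \<ge> - \<epsilon>" using mle[of "x0 + unitv j"] x0 by simp
    have h2: "u (x0 - unitv j) - u x0 \<ge> - \<epsilon>" using mle[of "x0 - unitv j"] x0 by simp
    have "a x0 j * (u (x0 + unitv j) - u x0) \<ge> a x0 j * (- \<epsilon>)"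
      using h1 a[of x0 j] by (intro mult_left_mono) auto
    moreover have "a x0 j * (- \<epsilon>) \<ge> B * (-\<epsilon>)" using a[of x0 j] epos by (simp add: mult_right_mono)
    moreover have "a (x0 - unitv j) j * (u (x0 - unitv j) - u x0) \<ge> a (x0 - unitv j) j * (- \<epsilon>)"
      using h2 a[of "x0 - unitv j" j] by (intro mult_left_mono) auto
    moreover have "a (x0 - unitv j) j * (- \<epsilon>) \<ge> B * (-\<epsilon>)"
      using a[of "x0 - unitv j" j] epos by (simp add: mult_right_mono)
    ultimately show ?thesis by (simp add: algebra_simps)
  qed
  have "(\<Sum>j\<in>UNIV. a x0 j * (u (x0 + unitv j) - u x0) - a (x0 - unitv j) j * (u x0 - u (x0 - unitv j)))
        \<ge> (\<Sum>j\<in>(UNIV::'d set). - 2 * B * \<epsilon>)"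
    by (rule sum_mono) (use flux in auto)
  then have "massive_op T a u x0 \<le> u x0 / T + 2 * d * B * \<epsilon>"
    by (simp add: massive_op_expand d_def)
  also have "\<dots> < (m + \<epsilon>) / T + 2 * d * B * \<epsilon>" using x0 T by (simp add: divide_strict_right_mono)
  also have "\<dots> = (m + \<epsilon> * (1 + 2 * d * B * T)) / T" using T by (simp add: field_simps)
  also have "m + \<epsilon> * (1 + 2 * d * B * T) = m / 2" unfolding \<epsilon>_def using den by (simp add: field_simps)
  also have "m / 2 / T < 0" using mneg T by (simp add: divide_neg_pos)
  finally show False using L[of x0] by simp
qed

lemma massive_op_comparison:
  fixes a :: "'d::finite cond"
  assumes T: "T > 0" and a: "\<And>y j. 0 \<le> a y j \<and> a y j \<le> B"
    and ub: "bounded (range u)" and vb: "bounded (range v)"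
    and L: "\<And>x. massive_op T a u x \<le> massive_op T a v x"
  shows "u x \<le> v x"
proof -
  have "v x - u x \<ge> 0"
    by (rule massive_op_nonneg_imp_nonneg[where a=a and B=B, OF T a bounded_range_diff[OF vb ub]])
      (simp add: massive_op_diff L)
  then show ?thesis by simp
qed

lemma massive_op_bounded_unique:
  fixes a :: "'d::finite cond"
  assumes T: "T > 0" and a: "\<And>y j. 0 \<le> a y j \<and> a y j \<le> B"
    and ub: "bounded (range u)" and vb: "bounded (range v)"
    and L: "\<And>x. massive_op T a u x = massive_op T a v x"
  shows "u = v"
proof
  fix x
  show "u x = v x"
    using massive_op_comparison[where a=a and B=B, OF T a ub vb, of x]
      massive_op_comparison[where a=a and B=B, OF T a vb ub, of x] L by force
qed

lemma summable_geometric_dominated_tail: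
  fixes f :: "nat \<Rightarrow> real"
  assumes \<kappa>: "0 \<le> \<kappa>" "\<kappa> < 1" and f: "\<And>k. \<bar>f k\<bar> \<le> \<kappa> ^ k * c"
  shows "summable f" and "\<bar>suminf f - (\<Sum>k<n. f k)\<bar> \<le> \<kappa> ^ n * (c / (1 - \<kappa>))"
proof -
  have g: "summable (\<lambda>k. \<kappa> ^ k * c)" using \<kappa> by (intro summable_mult2 summable_geometric) simp
  have af: "summable (\<lambda>k. \<bar>f k\<bar>)" by (rule summable_rabs_comparison_test[OF _ g]) (use f in auto)
  then show fs: "summable f" by (rule summable_rabs_cancel)
  have afn: "summable (\<lambda>k. \<bar>f (k + n)\<bar>)" using af by (rule summable_ignore_initial_segment)
  have gn: "summable (\<lambda>k. \<kappa> ^ (k + n) * c)" using g by (rule summable_ignore_initial_segment)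
  have "\<bar>suminf f - (\<Sum>k<n. f k)\<bar> = \<bar>\<Sum>k. f (k + n)\<bar>" using suminf_split_initial_segment[OF fs, of n] by simp
  also have "\<dots> \<le> (\<Sum>k. \<bar>f (k + n)\<bar>)"
    using afn by (rule summable_rabs)
  also have "\<dots> \<le> (\<Sum>k. \<kappa> ^ (k + n) * c)"
    by (rule suminf_le[OF f afn gn])
  also have "\<dots> = \<kappa> ^ n * (c / (1 - \<kappa>))"
    using suminf_mult2[OF summable_geometric[of \<kappa>], of "\<kappa> ^ n * c"] \<kappa> suminf_geometric[of \<kappa>]
    by (simp add: power_add mult_ac)
  finally show "\<bar>suminf f - (\<Sum>k<n. f k)\<bar> \<le> \<kappa> ^ n * (c / (1 - \<kappa>))" .
qed

text \<open>Banach's fixed point theorem in the sup-norm, phrased without the space of bounded functions.\<close>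

lemma pointwise_contraction_fixpoint:
  fixes \<Phi> :: "('a \<Rightarrow> real) \<Rightarrow> 'a \<Rightarrow> real"
  assumes \<kappa>: "0 \<le> \<kappa>" "\<kappa> < 1" and M: "0 \<le> M"
    and contr: "\<And>u v \<delta> x. (\<And>y. \<bar>u y - v y\<bar> \<le> \<delta>) \<Longrightarrow> \<bar>\<Phi> u x - \<Phi> v x\<bar> \<le> \<kappa> * \<delta>"
    and maps: "\<And>u x. (\<And>y. \<bar>u y\<bar> \<le> M) \<Longrightarrow> \<bar>\<Phi> u x\<bar> \<le> M"
  shows "\<exists>u. (\<forall>x. \<bar>u x\<bar> \<le> M) \<and> \<Phi> u = u"
proof -
  define U where "U n = (\<Phi> ^^ n) (\<lambda>_. 0)" for n
  have U0: "U 0 = (\<lambda>_. 0)" and US: "U (Suc n) = \<Phi> (U n)" for n unfolding U_def by auto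
  have Ubd: "\<bar>U n x\<bar> \<le> M" for n x
    by (induction n arbitrary: x) (use M in \<open>auto simp: U0 US intro: maps\<close>)
  have Udiff: "\<bar>U (Suc k) x - U k x\<bar> \<le> \<kappa> ^ k * (2 * M)" for k x
  proof (induction k arbitrary: x)
    case 0 then show ?case using Ubd[of 1 x] M by (simp add: U0)
  next
    case (Suc k)
    have "\<bar>\<Phi> (U (Suc k)) x - \<Phi> (U k) x\<bar> \<le> \<kappa> * (\<kappa> ^ k * (2 * M))" by (rule contr) (rule Suc.IH)
    then show ?case by (simp add: US[of "Suc k"] US[of k])
  qed
  define L where "L x = (\<Sum>k. U (Suc k) x - U k x)" for x
  define e where "e n = \<kappa> ^ n * (2 * M / (1 - \<kappa>))" for n
  have telescope: "(\<Sum>k<n. U (Suc k) x - U k x) = U n x" for n x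
    using sum_lessThan_telescope[of "\<lambda>k. U k x" n] by (simp add: U0)
  have tail: "\<bar>L x - U n x\<bar> \<le> e n" for n x
    using summable_geometric_dominated_tail(2)[OF \<kappa>, of "\<lambda>k. U (Suc k) x - U k x", OF Udiff]
    unfolding L_def e_def telescope .
  have e0: "e \<longlonglongrightarrow> 0" unfolding e_def using \<kappa> by (intro tendsto_mult_left_zero LIMSEQ_power_zero) auto
  have conv: "(\<lambda>n. U n x) \<longlonglongrightarrow> L x" for x
  proof (rule LIM_zero_cancel, rule Lim_null_comparison[OF always_eventually e0])
    show "\<forall>n. norm (U n x - L x) \<le> e n" using tail by (simp add: abs_minus_commute)
  qed
  show ?thesis
  proof (intro exI conjI allI ext)
    show "\<bar>L x\<bar> \<le> M" for x
      by (rule tendsto_le[OF sequentially_bot tendsto_const tendsto_rabs[OF conv]]) (use Ubd in auto)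
    fix x
    have "\<bar>\<Phi> L x - L x\<bar> \<le> (1 + \<kappa>) * e n" for n
    proof -
      have "\<bar>\<Phi> L x - \<Phi> (U n) x\<bar> \<le> \<kappa> * e n" by (rule contr) (rule tail)
      moreover have "e (Suc n) \<le> e n"
        unfolding e_def using \<kappa> M by (intro mult_right_mono power_decreasing) auto
      ultimately show ?thesis using tail[of x "Suc n"] by (simp add: US algebra_simps)
    qed
    moreover have "(\<lambda>n. (1 + \<kappa>) * e n) \<longlonglongrightarrow> 0" using tendsto_mult_right_zero[OF e0] .
    ultimately have "\<bar>\<Phi> L x - L x\<bar> \<le> 0" by (intro tendsto_le[OF sequentially_bot _ tendsto_const]) auto
    then show "\<Phi> L x = L x" by simp
  qed
qed

definition massive_op_diag :: "real \<Rightarrow> 'd::finite cond \<Rightarrow> 'd site \<Rightarrow> real" where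
  "massive_op_diag T a x = 1 / T + (\<Sum>j\<in>UNIV. a x j + a (x - unitv j) j)"

definition massive_op_offdiag :: "'d::finite cond \<Rightarrow> ('d site \<Rightarrow> real) \<Rightarrow> 'd site \<Rightarrow> real" where
  "massive_op_offdiag a u x = (\<Sum>j\<in>UNIV. a x j * u (x + unitv j) + a (x - unitv j) j * u (x - unitv j))"

lemma massive_op_jacobi_split:
  "massive_op T a u x = massive_op_diag T a x * u x - massive_op_offdiag a u x"
  unfolding massive_op_expand massive_op_diag_def massive_op_offdiag_def
  by (simp add: algebra_simps sum_distrib_right sum_distrib_left sum.distrib sum_subtractf)

lemma massive_op_offdiag_lipschitz:
  fixes a :: "'d::finite cond"
  assumes a: "\<And>y j. 0 \<le> a y j" and uv: "\<And>y. \<bar>u y - v y\<bar> \<le> \<delta>"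
  shows "\<bar>massive_op_offdiag a u x - massive_op_offdiag a v x\<bar> \<le> (massive_op_diag T a x - 1 / T) * \<delta>"
proof -
  have "\<bar>massive_op_offdiag a u x - massive_op_offdiag a v x\<bar>
      = \<bar>\<Sum>j\<in>UNIV. a x j * (u (x + unitv j) - v (x + unitv j))
                  + a (x - unitv j) j * (u (x - unitv j) - v (x - unitv j))\<bar>"
    unfolding massive_op_offdiag_def sum_subtractf[symmetric]
    by (rule arg_cong[where f=abs], rule sum.cong) (simp_all add: algebra_simps)
  also have "\<dots> \<le> (\<Sum>j\<in>UNIV. \<bar>a x j * (u (x + unitv j) - v (x + unitv j))
                  + a (x - unitv j) j * (u (x - unitv j) - v (x - unitv j))\<bar>)"
    by (rule sum_abs)
  also have "\<dots> \<le> (\<Sum>j\<in>UNIV. a x j * \<delta> + a (x - unitv j) j * \<delta>)"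
  proof (rule sum_mono)
    fix j
    have "\<bar>a y j * (u w - v w)\<bar> \<le> a y j * \<delta>" for y w
      unfolding abs_mult using uv[of w] a[of y j] by (intro mult_mono) auto
    then show "\<bar>a x j * (u (x + unitv j) - v (x + unitv j)) + a (x - unitv j) j * (u (x - unitv j) - v (x - unitv j))\<bar>
        \<le> a x j * \<delta> + a (x - unitv j) j * \<delta>"
      by (meson abs_triangle_ineq add_mono order_trans)
  qed
  also have "\<dots> = (massive_op_diag T a x - 1 / T) * \<delta>"
    unfolding massive_op_diag_def by (simp add: sum_distrib_left algebra_simps)
  finally show ?thesis .
qed

text \<open>The Jacobi iteration \<open>u \<mapsto> (f + offdiag u) / diag\<close> contracts by
  \<open>1 - 1/(1 + 2 d B T)\<close>, because \<open>diag\<close> exceeds the total off-diagonal weight by \<open>1/T\<close>.\<close>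

lemma massive_op_bounded_solvable:
  fixes a :: "'d::finite cond"
  assumes T: "T > 0" and a: "\<And>y j. 0 \<le> a y j \<and> a y j \<le> B"
    and f: "\<And>x. \<bar>f x\<bar> \<le> M"
  shows "\<exists>u. (\<forall>x. \<bar>u x\<bar> \<le> T * M) \<and> (\<forall>x. massive_op T a u x = f x)"
proof -
  define d where "d = real CARD('d)"
  define m where "m = massive_op_diag T a"
  have B0: "B \<ge> 0" using a[of undefined undefined] by (metis order_trans)
  have M0: "M \<ge> 0" using f[of undefined] by simp
  have mlo: "m x \<ge> 1 / T" for x
    unfolding m_def massive_op_diag_def using a by (simp add: sum_nonneg add_nonneg_nonneg)
  have mpos: "m x > 0" for x using mlo[of x] T by (meson less_le_trans zero_less_divide_1_iff)
  have mhi: "m x \<le> 1 / T + 2 * d * B" for x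
  proof -
    have "(\<Sum>j\<in>UNIV. a x j + a (x - unitv j) j) \<le> (\<Sum>j\<in>(UNIV::'d set). 2 * B)"
      by (rule sum_mono) (use a in \<open>smt (verit)\<close>)
    then show ?thesis unfolding m_def massive_op_diag_def d_def by simp
  qed
  define \<kappa> where "\<kappa> = 1 - 1 / (1 + 2 * d * B * T)"
  have dBT: "d * B * T \<ge> 0" unfolding d_def using B0 T by simp
  have \<kappa>: "0 \<le> \<kappa>" "\<kappa> < 1" unfolding \<kappa>_def using dBT by (auto simp: field_simps)
  define \<Phi> where "\<Phi> u x = (f x + massive_op_offdiag a u x) / m x" for u x
  have offdiag: "\<bar>massive_op_offdiag a u x - massive_op_offdiag a v x\<bar> \<le> (m x - 1 / T) * \<delta>"
    if "\<And>y. \<bar>u y - v y\<bar> \<le> \<delta>" for u v x \<delta>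
    unfolding m_def by (rule massive_op_offdiag_lipschitz) (use a that in auto)
  have contr: "\<bar>\<Phi> u x - \<Phi> v x\<bar> \<le> \<kappa> * \<delta>" if "\<And>y. \<bar>u y - v y\<bar> \<le> \<delta>" for u v x \<delta>
  proof -
    have d0: "\<delta> \<ge> 0" using that[of x] by linarith
    have "\<Phi> u x - \<Phi> v x = (massive_op_offdiag a u x - massive_op_offdiag a v x) / m x"
      unfolding \<Phi>_def using mpos[of x] by (simp add: field_simps)
    then have "\<bar>\<Phi> u x - \<Phi> v x\<bar> = \<bar>massive_op_offdiag a u x - massive_op_offdiag a v x\<bar> / m x"
      using mpos[of x] by simp
    also have "\<dots> \<le> (m x - 1 / T) * \<delta> / m x"
      using offdiag[OF that] mpos[of x] by (simp add: divide_right_mono)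
    also have "\<dots> = (1 - 1 / (T * m x)) * \<delta>" using mpos[of x] T by (simp add: field_simps)
    also have "\<dots> \<le> \<kappa> * \<delta>"
    proof (rule mult_right_mono[OF _ d0])
      have "T * m x \<le> 1 + 2 * d * B * T" using mhi[of x] T by (simp add: field_simps)
      then have "1 / (1 + 2 * d * B * T) \<le> 1 / (T * m x)"
        using mpos[of x] T by (simp add: frac_le)
      then show "1 - 1 / (T * m x) \<le> \<kappa>" unfolding \<kappa>_def by simp
    qed
    finally show ?thesis .
  qed
  have maps: "\<bar>\<Phi> u x\<bar> \<le> T * M" if "\<And>y. \<bar>u y\<bar> \<le> T * M" for u x
  proof -
    have "\<bar>massive_op_offdiag a u x\<bar> \<le> (m x - 1 / T) * (T * M)"
      using offdiag[of u "\<lambda>_. 0" "T * M" x] that by (simp add: massive_op_offdiag_def)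
    then have "\<bar>f x + massive_op_offdiag a u x\<bar> \<le> M + (m x - 1 / T) * (T * M)"
      using f[of x] by (meson abs_triangle_ineq add_mono order_trans)
    also have "\<dots> = m x * (T * M)" using T by (simp add: field_simps)
    finally show ?thesis using mpos[of x] by (simp add: \<Phi>_def divide_le_eq mult.commute)
  qed
  obtain u where u: "\<And>x. \<bar>u x\<bar> \<le> T * M" and fixed: "\<Phi> u = u"
    using pointwise_contraction_fixpoint[where \<Phi>=\<Phi> and M="T * M", OF \<kappa> _ contr maps] T M0 by auto
  have "massive_op T a u x = f x" for x
  proof -
    have "massive_op T a u x = m x * \<Phi> u x - massive_op_offdiag a u x"
      by (simp add: massive_op_jacobi_split m_def fixed)
    then show ?thesis unfolding \<Phi>_def using mpos[of x] by simp
  qed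
  then show ?thesis using u by blast
qed

lemma unitv_nth: "unitv j $ k = (if k = j then 1 else 0)"
  by (simp add: unitv_def axis_def)

definition lattice_dist :: "'d::finite site \<Rightarrow> 'd site \<Rightarrow> nat" where
  "lattice_dist y x = (\<Sum>k\<in>UNIV. nat \<bar>x $ k - y $ k\<bar>)"

lemma lattice_dist_neighbour_le:
  fixes y x :: "'d::finite site"
  shows "lattice_dist y x \<le> lattice_dist y (x + unitv j) + 1"
    and "lattice_dist y x \<le> lattice_dist y (x - unitv j) + 1"
proof -
  have "lattice_dist y x \<le> (\<Sum>k\<in>UNIV. nat \<bar>(x + unitv j) $ k - y $ k\<bar> + (if k = j then 1 else 0))"
    unfolding lattice_dist_def by (rule sum_mono) (auto simp: unitv_nth)
  then show "lattice_dist y x \<le> lattice_dist y (x + unitv j) + 1"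
    unfolding lattice_dist_def by (simp add: sum.distrib)
  have "lattice_dist y x \<le> (\<Sum>k\<in>UNIV. nat \<bar>(x - unitv j) $ k - y $ k\<bar> + (if k = j then 1 else 0))"
    unfolding lattice_dist_def by (rule sum_mono) (auto simp: unitv_nth)
  then show "lattice_dist y x \<le> lattice_dist y (x - unitv j) + 1"
    unfolding lattice_dist_def by (simp add: sum.distrib)
qed

definition decay_rate :: "real \<Rightarrow> real \<Rightarrow> 'd::finite itself \<Rightarrow> real" where
  "decay_rate B T _ = 1 / (1 + 1 / (4 * real CARD('d) * (B + 1) * T))"

lemma decay_rate_bounds:
  assumes "T > 0" "B \<ge> 0"
  shows "decay_rate B T (TYPE('d::finite)) > 0" "decay_rate B T (TYPE('d)) < 1"
proof -
  define c where "c = 1 / (4 * real CARD('d) * (B + 1) * T)"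
  have "c > 0" unfolding c_def using assms by simp
  moreover have "decay_rate B T (TYPE('d)) = 1 / (1 + c)" unfolding decay_rate_def c_def ..
  ultimately show "decay_rate B T (TYPE('d::finite)) > 0" "decay_rate B T (TYPE('d)) < 1" by auto
qed

text \<open>With \<open>\<rho>\<close> the decay rate, \<open>\<rho>^|x - y|\<close> changes by a factor at most \<open>1/\<rho> = 1 + c\<close> between
  neighbours, so its discrete divergence term is at most \<open>2 d B c\<close> times itself, which is half of
  the massive term.\<close>

lemma massive_op_decay_barrier:
  fixes a :: "'d::finite cond"
  assumes T: "T > 0" and a: "\<And>y j. 0 \<le> a y j \<and> a y j \<le> B"
  defines "\<rho> \<equiv> decay_rate B T TYPE('d)"
  shows "massive_op T a (\<lambda>x. \<rho> ^ lattice_dist y x) x \<ge> \<rho> ^ lattice_dist y x / (2 * T)"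
proof -
  define d where "d = real CARD('d)"
  define b where "b x = \<rho> ^ lattice_dist y x" for x
  have B0: "B \<ge> 0" using a[of undefined undefined] by (metis order_trans)
  have d1: "d \<ge> 1" unfolding d_def by (simp add: Suc_leI)
  define c where "c = 1 / (4 * d * (B + 1) * T)"
  have cpos: "c > 0" unfolding c_def using d1 B0 T by simp
  have r: "\<rho> = 1 / (1 + c)" unfolding \<rho>_def decay_rate_def c_def d_def ..
  have r0: "\<rho> > 0" and r1: "\<rho> \<le> 1" using cpos r by auto
  have b0: "b x \<ge> 0" for x unfolding b_def using r0 by simp
  have neighbour: "b w \<le> b x + b x * c" if "lattice_dist y x \<le> lattice_dist y w + 1" for x w
  proof -
    have "\<rho> ^ lattice_dist y w * \<rho> \<le> \<rho> ^ lattice_dist y x"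
      using power_decreasing[of "lattice_dist y x" "lattice_dist y w + 1" \<rho>] that r0 r1
      by (simp add: mult.commute)
    moreover have "\<rho> * (1 + c) = 1" using r cpos by simp
    ultimately have "\<rho> ^ lattice_dist y w \<le> \<rho> ^ lattice_dist y x * (1 + c)"
      using cpos by (metis mult.assoc mult.right_neutral mult_right_mono less_le_not_le add_pos_pos zero_less_one)
    then show ?thesis unfolding b_def by (simp add: algebra_simps)
  qed
  have flux: "a x j * (b (x + unitv j) - b x) - a (x - unitv j) j * (b x - b (x - unitv j))
      \<le> 2 * B * (b x * c)" for j
  proof -
    have e1: "b (x + unitv j) - b x \<le> b x * c" and e2: "b (x - unitv j) - b x \<le> b x * c"
      using neighbour lattice_dist_neighbour_le[of y x j] by force+
    have bc: "b x * c \<ge> 0" using b0 cpos by simp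
    have "a x j * (b (x + unitv j) - b x) \<le> B * (b x * c)"
      using e1 a[of x j] bc by (meson mult_left_mono mult_right_mono order_trans)
    moreover have "a (x - unitv j) j * (b (x - unitv j) - b x) \<le> B * (b x * c)"
      using e2 a[of "x - unitv j" j] bc by (meson mult_left_mono mult_right_mono order_trans)
    ultimately show ?thesis by (simp add: algebra_simps)
  qed
  have "(\<Sum>j\<in>UNIV. a x j * (b (x + unitv j) - b x) - a (x - unitv j) j * (b x - b (x - unitv j)))
     \<le> (\<Sum>j\<in>(UNIV::'d set). 2 * B * (b x * c))" by (rule sum_mono) (rule flux)
  also have "\<dots> = d * 2 * B * (b x * c)" by (simp add: d_def)
  also have "\<dots> = b x * (B / (B + 1)) / (2 * T)"
  proof -
    define E where "E = B + 1"
    have "E > 0" "d > 0" "c = 1 / (4 * d * E * T)" using B0 d1 unfolding E_def c_def by auto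
    then show ?thesis unfolding E_def[symmetric] using T by (simp add: field_simps)
  qed
  also have "\<dots> \<le> b x / (2 * T)"
    using B0 T b0[of x] by (intro divide_right_mono mult_left_le) auto
  finally have "massive_op T a b x \<ge> b x / T - b x / (2 * T)" unfolding massive_op_expand by simp
  moreover have "b x / T - b x / (2 * T) = b x / (2 * T)" using T by (simp add: field_simps)
  ultimately show ?thesis unfolding b_def by simp
qed

definition delta :: "'d::finite site \<Rightarrow> 'd site \<Rightarrow> real" where
  "delta y x = (if x = y then 1 else 0)"

lemma point_source_solution_decay:
  fixes a :: "'d::finite cond"
  assumes T: "T > 0" and a: "\<And>y j. 0 \<le> a y j \<and> a y j \<le> B"
    and Gb: "bounded (range G)" and L: "\<And>x. massive_op T a G x = delta y x"
  shows "\<bar>G x\<bar> \<le> 2 * T * decay_rate B T TYPE('d) ^ lattice_dist y x"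
proof -
  define \<rho> where "\<rho> = decay_rate B T TYPE('d)"
  have B0: "B \<ge> 0" using a[of undefined undefined] by (metis order_trans)
  have r0: "\<rho> > 0" and r1: "\<rho> < 1" unfolding \<rho>_def using decay_rate_bounds[OF T B0] by auto
  define v where "v x = 2 * T * \<rho> ^ lattice_dist y x" for x
  have vb: "bounded (range v)" unfolding bounded_range_real_iff
  proof (intro exI allI)
    fix x
    have "\<rho> ^ lattice_dist y x \<le> 1" using r0 r1 by (intro power_le_one) auto
    then show "\<bar>v x\<bar> \<le> 2 * T" unfolding v_def using T r0 by simp
  qed
  have Lv: "massive_op T a v x \<ge> \<rho> ^ lattice_dist y x" for x
  proof -
    have "massive_op T a v x = 2 * T * massive_op T a (\<lambda>x. \<rho> ^ lattice_dist y x) x"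
      unfolding v_def by (rule massive_op_scale)
    also have "\<dots> \<ge> 2 * T * (\<rho> ^ lattice_dist y x / (2 * T))"
      using massive_op_decay_barrier[OF T a, of y x] T unfolding \<rho>_def by (intro mult_left_mono) auto
    finally show ?thesis using T by simp
  qed
  have "delta y x \<le> massive_op T a v x" for x
  proof (cases "x = y")
    case True then show ?thesis using Lv[of x] by (simp add: delta_def lattice_dist_def)
  next
    case False then show ?thesis using Lv[of x] r0 by (simp add: delta_def) (meson order_trans zero_le_power less_imp_le)
  qed
  then have "G x \<le> v x"
    by (intro massive_op_comparison[where a=a and B=B, OF T a Gb vb]) (simp add: L)
  moreover have "- G x \<le> v x"
  proof (rule massive_op_comparison[where a=a and B=B, OF T a _ vb])
    show "bounded (range (\<lambda>x. - G x))" using Gb by (auto simp: bounded_range_real_iff)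
    show "massive_op T a (\<lambda>x. - G x) x \<le> massive_op T a v x" for x
    proof -
      have "massive_op T a (\<lambda>x. - G x) x \<le> 0" by (simp add: massive_op_uminus L delta_def)
      also have "0 \<le> \<rho> ^ lattice_dist y x" using r0 by simp
      finally show ?thesis using Lv[of x] by linarith
    qed
  qed
  ultimately show ?thesis unfolding v_def \<rho>_def by linarith
qed

lemma summable_on_geometric_int:
  fixes \<rho> :: real assumes r: "0 \<le> \<rho>" "\<rho> < 1"
  shows "(\<lambda>m::int. \<rho> ^ nat \<bar>m - c\<bar>) summable_on UNIV"
proof -
  have geom: "(\<lambda>n::nat. \<rho> ^ n) summable_on UNIV"
    using r by (subst summable_on_UNIV_nonneg_real_iff) (auto intro: summable_geometric)
  have s1: "(\<lambda>m::int. \<rho> ^ nat \<bar>m\<bar>) summable_on range int"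
    using geom by (subst summable_on_reindex) (auto simp: o_def)
  have s2: "(\<lambda>m::int. \<rho> ^ nat \<bar>m\<bar>) summable_on range (\<lambda>n. - int n)"
    using geom by (subst summable_on_reindex) (auto simp: inj_on_def o_def)
  have "m \<in> range int \<union> range (\<lambda>n. - int n)" for m :: int
  proof (cases "m \<ge> 0")
    case True then show ?thesis by (metis UnI1 nonneg_int_cases rangeI)
  next
    case False then have "m = - int (nat (- m))" by simp
    then show ?thesis by blast
  qed
  then have "range int \<union> range (\<lambda>n. - int n) = (UNIV :: int set)" by blast
  then have s: "(\<lambda>m::int. \<rho> ^ nat \<bar>m\<bar>) summable_on UNIV"
    using summable_on_union[OF s1 s2] by simp
  have "bij_betw (\<lambda>m. m - c) UNIV (UNIV :: int set)"
    by (rule bij_betwI[of _ _ _ "\<lambda>m. m + c"]) auto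
  then show ?thesis
    using summable_on_reindex_bij_betw[of "\<lambda>m. m - c" UNIV UNIV "\<lambda>m. \<rho> ^ nat \<bar>m\<bar>"] s by simp
qed

lemma summable_on_power_lattice_dist:
  fixes \<rho> :: real and y :: "'d::finite site" assumes r: "0 \<le> \<rho>" "\<rho> < 1"
  shows "(\<lambda>x. \<rho> ^ lattice_dist y x) summable_on UNIV"
proof -
  define f where "f k m = \<rho> ^ nat \<bar>m - y $ k\<bar>" for k m
  have "Infinite_Set_Sum.abs_summable_on (\<lambda>g. \<Prod>k\<in>UNIV. f k (g k)) (PiE UNIV (\<lambda>_. UNIV))"
  proof (rule abs_summable_on_prod_PiE)
    fix k :: 'd
    have "(\<lambda>x. norm (f k x)) summable_on UNIV"
      unfolding f_def using summable_on_geometric_int[OF r, of "y $ k"] r by simp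
    then show "Infinite_Set_Sum.abs_summable_on (f k) UNIV" by (rule abs_summable_equivalent[THEN iffD1])
  qed auto
  moreover have "PiE UNIV (\<lambda>_. UNIV) = (UNIV :: ('d \<Rightarrow> int) set)" by (auto simp: PiE_def extensional_def)
  ultimately have "(\<lambda>g. norm (\<Prod>k\<in>UNIV. f k (g k))) summable_on UNIV"
    by (intro abs_summable_equivalent[THEN iffD2]) simp
  then have "(\<lambda>g. \<Prod>k\<in>UNIV. f k (g k)) summable_on UNIV"
    by (rule summable_on_iff_abs_summable_on_real[THEN iffD2])
  moreover have "surj (vec_nth :: 'd site \<Rightarrow> ('d \<Rightarrow> int))"
    by (rule surjI[where f=vec_lambda]) (simp add: vec_lambda_inverse)
  ultimately have s: "(\<lambda>g. \<Prod>k\<in>UNIV. f k (g k)) summable_on range vec_nth" by simp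
  have "inj (vec_nth :: 'd site \<Rightarrow> ('d \<Rightarrow> int))" by (rule injI) (simp add: vec_nth_inject)
  then have "((\<lambda>g. \<Prod>k\<in>UNIV. f k (g k)) \<circ> vec_nth) summable_on UNIV"
    using s summable_on_reindex by blast
  then show ?thesis unfolding lattice_dist_def power_sum o_def f_def by simp
qed

lemma summable_on_bounded_mult:
  fixes u v :: "'a \<Rightarrow> real"
  assumes "u summable_on A" "\<And>x. \<bar>v x\<bar> \<le> K"
  shows "(\<lambda>x. v x * u x) summable_on A"
proof -
  have "(\<lambda>x. norm (u x)) summable_on A"
    using assms(1) by (rule summable_on_iff_abs_summable_on_real[THEN iffD1])
  then have "(\<lambda>x. K * norm (u x)) summable_on A" by (rule summable_on_cmult_right)
  then have "(\<lambda>x. norm (v x * u x)) summable_on A"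
  proof (rule Infinite_Sum.abs_summable_on_comparison_test')
    show "norm (v x * u x) \<le> K * norm (u x)" for x
      unfolding norm_mult real_norm_def abs_mult by (rule mult_right_mono) (use assms(2)[of x] in auto)
  qed
  then show ?thesis by (rule summable_on_iff_abs_summable_on_real[THEN iffD2])
qed

lemma point_source_solution_summable:
  fixes a :: "'d::finite cond"
  assumes T: "T > 0" and a: "\<And>y j. 0 \<le> a y j \<and> a y j \<le> B"
    and Gb: "bounded (range G)" and L: "\<And>x. massive_op T a G x = delta y x"
  shows "G summable_on UNIV"
proof -
  define \<rho> where "\<rho> = decay_rate B T TYPE('d)"
  have B0: "B \<ge> 0" using a[of undefined undefined] by (metis order_trans)
  have r0: "\<rho> > 0" and r1: "\<rho> < 1" unfolding \<rho>_def using decay_rate_bounds[OF T B0] by auto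
  have "(\<lambda>x. 2 * T * \<rho> ^ lattice_dist y x) summable_on UNIV"
    using summable_on_power_lattice_dist[of \<rho> y] r0 r1 by (intro summable_on_cmult_right) auto
  then have "(\<lambda>x. norm (G x)) summable_on UNIV"
    by (rule Infinite_Sum.abs_summable_on_comparison_test')
      (use point_source_solution_decay[OF T a Gb L] in \<open>simp add: \<rho>_def\<close>)
  then show ?thesis by (rule summable_on_iff_abs_summable_on_real[THEN iffD2])
qed

lemma summable_on_translate:
  fixes u :: "'d::finite site \<Rightarrow> real"
  assumes "u summable_on UNIV"
  shows "(\<lambda>x. u (x + c)) summable_on UNIV"
proof -
  have "bij_betw (\<lambda>x. x + c) UNIV UNIV" by (rule bij_betwI[of _ _ _ "\<lambda>x. x - c"]) auto
  then show ?thesis using summable_on_reindex_bij_betw[of "\<lambda>x. x + c" UNIV UNIV u] assms by simp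
qed

lemma infsum_translate:
  fixes u :: "'d::finite site \<Rightarrow> real"
  shows "(\<Sum>\<^sub>\<infinity>x. u (x + c)) = (\<Sum>\<^sub>\<infinity>x. u x)"
proof -
  have "bij_betw (\<lambda>x. x + c) UNIV UNIV" by (rule bij_betwI[of _ _ _ "\<lambda>x. x - c"]) auto
  then show ?thesis by (rule infsum_reindex_bij_betw)
qed

lemma summable_on_diff:
  fixes f g :: "'a \<Rightarrow> real"
  assumes "f summable_on A" "g summable_on A"
  shows "(\<lambda>x. f x - g x) summable_on A"
  using summable_on_add[OF assms(1) summable_on_uminus[THEN iffD2, OF assms(2)]] by simp

lemma infsum_diff:
  fixes f g :: "'a \<Rightarrow> real"
  assumes "f summable_on A" "g summable_on A"
  shows "infsum (\<lambda>x. f x - g x) A = infsum f A - infsum g A"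
  using infsum_add[OF assms(1) summable_on_uminus[THEN iffD2, OF assms(2)]] by (simp add: infsum_uminus)

lemma summable_on_sum:
  fixes f :: "'i \<Rightarrow> 'a \<Rightarrow> real"
  assumes "finite I" "\<And>j. j \<in> I \<Longrightarrow> f j summable_on A"
  shows "(\<lambda>x. \<Sum>j\<in>I. f j x) summable_on A"
  using assms by (induction I rule: finite_induct) (auto intro: summable_on_add)

lemma infsum_sum:
  fixes f :: "'i \<Rightarrow> 'a \<Rightarrow> real"
  assumes "finite I" "\<And>j. j \<in> I \<Longrightarrow> f j summable_on A"
  shows "infsum (\<lambda>x. \<Sum>j\<in>I. f j x) A = (\<Sum>j\<in>I. infsum (f j) A)"
  using assms
proof (induction I rule: finite_induct)
  case (insert j I)
  then show ?case using infsum_add[of "f j" A "\<lambda>x. \<Sum>j\<in>I. f j x"] summable_on_sum[of I f A] by simp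
qed simp

lemma infsum_single_point:
  fixes f :: "'a \<Rightarrow> real"
  shows "(\<Sum>\<^sub>\<infinity>x. if x = p then f x else 0) = f p"
proof -
  have "(\<Sum>\<^sub>\<infinity>x. if x = p then f x else 0) = (\<Sum>\<^sub>\<infinity>x\<in>{p}. if x = p then f x else 0)"
    by (rule infsum_cong_neutral) auto
  then show ?thesis by simp
qed

lemma summable_on_single_point:
  fixes f :: "'a \<Rightarrow> real"
  shows "(\<lambda>x. if x = p then f x else 0) summable_on UNIV"
proof -
  have "(\<lambda>x. if x = p then f x else 0) summable_on {p}" by simp
  moreover have "(\<lambda>x. if x = p then f x else 0) summable_on UNIV
      \<longleftrightarrow> (\<lambda>x. if x = p then f x else 0) summable_on {p}"
    by (rule summable_on_cong_neutral) auto
  ultimately show ?thesis by simp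
qed

lemma nonneg_le_infsum:
  fixes f :: "'a \<Rightarrow> real"
  assumes "f summable_on UNIV" "\<And>x. f x \<ge> 0"
  shows "f p \<le> infsum f UNIV"
  using finite_sum_le_infsum[OF assms(1), of "{p}"] assms(2) by simp

lemma l2_summable_bounded:
  fixes v :: "'a \<Rightarrow> real"
  assumes "(\<lambda>x. (v x)\<^sup>2) summable_on UNIV"
  shows "\<bar>v p\<bar> \<le> 1 + (\<Sum>\<^sub>\<infinity>x. (v x)\<^sup>2)"
proof -
  have "\<bar>v p\<bar> \<le> 1 + (v p)\<^sup>2"
    using zero_le_power2[of "\<bar>v p\<bar> - 1"] by (simp add: power2_eq_square algebra_simps)
  also have "\<dots> \<le> 1 + (\<Sum>\<^sub>\<infinity>x. (v x)\<^sup>2)" using nonneg_le_infsum[OF assms] by simp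
  finally show ?thesis .
qed

lemma massive_op_summation_by_parts:
  fixes a :: "'d::finite cond"
  assumes a: "\<And>y j. 0 \<le> a y j \<and> a y j \<le> B" and u: "u summable_on UNIV" and v: "\<And>x. \<bar>v x\<bar> \<le> K"
  shows "(\<Sum>\<^sub>\<infinity>x. u x * v x / T) + (\<Sum>\<^sub>\<infinity>x. (\<Sum>i\<in>UNIV. grad v x i * a x i * grad u x i))
         = (\<Sum>\<^sub>\<infinity>x. v x * massive_op T a u x)"
proof -
  define h where "h j x = a x j * grad u x j" for j x
  have ab: "\<bar>a x j\<bar> \<le> B" for x j using a[of x j] by simp
  have gs: "(\<lambda>x. grad u x j) summable_on UNIV" for j
    unfolding grad_def by (rule summable_on_diff[OF summable_on_translate[OF u] u])
  have hs: "h j summable_on UNIV" for j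
    unfolding h_def by (rule summable_on_bounded_mult[OF gs ab])
  have hs': "(\<lambda>x. h j (x - unitv j)) summable_on UNIV" for j
    using summable_on_translate[OF hs[of j], of "- unitv j"] by simp
  have s1: "(\<lambda>x. v (x + unitv j) * h j x) summable_on UNIV" for j
    by (rule summable_on_bounded_mult[OF hs v])
  have s2: "(\<lambda>x. v x * h j x) summable_on UNIV" for j
    by (rule summable_on_bounded_mult[OF hs v])
  have s3: "(\<lambda>x. v x * h j (x - unitv j)) summable_on UNIV" for j
    by (rule summable_on_bounded_mult[OF hs' v])
  have su: "(\<lambda>x. u x * v x / T) summable_on UNIV"
    using summable_on_cmult_left[OF summable_on_bounded_mult[OF u v], where c="1 / T"]
    by (simp add: mult.commute)
  have shift: "(\<Sum>\<^sub>\<infinity>x. v (x + unitv j) * h j x) = (\<Sum>\<^sub>\<infinity>x. v x * h j (x - unitv j))" for j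
    using infsum_translate[of "\<lambda>x. v (x + unitv j) * h j x" "- unitv j"] by simp
  have "(\<Sum>\<^sub>\<infinity>x. (\<Sum>i\<in>UNIV. grad v x i * a x i * grad u x i))
      = (\<Sum>\<^sub>\<infinity>x. (\<Sum>i\<in>UNIV. v (x + unitv i) * h i x - v x * h i x))"
    unfolding h_def grad_def by (simp add: algebra_simps)
  also have "\<dots> = (\<Sum>i\<in>UNIV. (\<Sum>\<^sub>\<infinity>x. v (x + unitv i) * h i x - v x * h i x))"
    by (rule infsum_sum) (use summable_on_diff[OF s1 s2] in auto)
  also have "\<dots> = (\<Sum>i\<in>UNIV. (\<Sum>\<^sub>\<infinity>x. v x * h i (x - unitv i) - v x * h i x))"
    by (rule sum.cong) (simp_all add: infsum_diff[OF s1 s2] infsum_diff[OF s3 s2] shift)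
  also have "\<dots> = (\<Sum>\<^sub>\<infinity>x. (\<Sum>i\<in>UNIV. v x * h i (x - unitv i) - v x * h i x))"
    by (rule infsum_sum[symmetric]) (use summable_on_diff[OF s3 s2] in auto)
  finally have parts: "(\<Sum>\<^sub>\<infinity>x. (\<Sum>i\<in>UNIV. grad v x i * a x i * grad u x i))
      = (\<Sum>\<^sub>\<infinity>x. (\<Sum>i\<in>UNIV. v x * h i (x - unitv i) - v x * h i x))" .
  have "(\<lambda>x. \<Sum>i\<in>UNIV. v x * h i (x - unitv i) - v x * h i x) summable_on UNIV"
    by (rule summable_on_sum) (use summable_on_diff[OF s3 s2] in auto)
  then have "(\<Sum>\<^sub>\<infinity>x. u x * v x / T) + (\<Sum>\<^sub>\<infinity>x. (\<Sum>i\<in>UNIV. grad v x i * a x i * grad u x i))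
     = (\<Sum>\<^sub>\<infinity>x. u x * v x / T + (\<Sum>i\<in>UNIV. v x * h i (x - unitv i) - v x * h i x))"
    unfolding parts using infsum_add[OF su] by simp
  also have "\<dots> = (\<Sum>\<^sub>\<infinity>x. v x * massive_op T a u x)"
  proof (rule infsum_cong)
    fix x
    have "massive_op T a u x = u x / T - (\<Sum>i\<in>UNIV. h i x - h i (x - unitv i))"
      unfolding massive_op_def divstar_def h_def ..
    then show "u x * v x / T + (\<Sum>i\<in>UNIV. v x * h i (x - unitv i) - v x * h i x) = v x * massive_op T a u x"
      by (simp only:) (simp add: algebra_simps sum_distrib_left sum_subtractf)
  qed
  finally show ?thesis .
qed

lemma point_source_solution_exists:
  fixes a :: "'d::finite cond"
  assumes T: "T > 0" and a: "\<And>y j. 0 \<le> a y j \<and> a y j \<le> B"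
  shows "\<exists>G. bounded (range G) \<and> (\<forall>x. massive_op T a G x = delta y x)"
proof -
  have "\<And>x. \<bar>delta y x\<bar> \<le> 1" by (simp add: delta_def)
  then obtain G where "\<forall>x. \<bar>G x\<bar> \<le> T * 1" "\<forall>x. massive_op T a G x = delta y x"
    using massive_op_bounded_solvable[where a=a and B=B, OF T a] by blast
  then show ?thesis by (auto simp: bounded_range_real_iff)
qed

lemma green_eq_of_point_source_solution:
  fixes a :: "'d::finite cond"
  assumes T: "T > 0" and a: "\<And>y j. 0 \<le> a y j \<and> a y j \<le> B"
    and Gb: "bounded (range G)" and L: "\<And>x. massive_op T a G x = delta y x"
  shows "green_eq T a y G"
proof -
  have Gs: "G summable_on UNIV" by (rule point_source_solution_summable[OF T a Gb L])
  obtain K where K: "\<And>x. \<bar>G x\<bar> \<le> K" using Gb by (auto simp: bounded_range_real_iff)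
  have "(\<lambda>x. G x * G x) summable_on UNIV" by (rule summable_on_bounded_mult[OF Gs K])
  then have G2: "(\<lambda>x. (G x)\<^sup>2) summable_on UNIV" by (simp add: power2_eq_square)
  have "(\<Sum>\<^sub>\<infinity>x. G x * v x / T) + (\<Sum>\<^sub>\<infinity>x. (\<Sum>i\<in>UNIV. grad v x i * a x i * grad G x i)) = v y"
    if v2: "(\<lambda>x. (v x)\<^sup>2) summable_on UNIV" for v
  proof -
    have "(\<Sum>\<^sub>\<infinity>x. G x * v x / T) + (\<Sum>\<^sub>\<infinity>x. (\<Sum>i\<in>UNIV. grad v x i * a x i * grad G x i))
        = (\<Sum>\<^sub>\<infinity>x. v x * massive_op T a G x)"
      by (rule massive_op_summation_by_parts[OF a Gs l2_summable_bounded[OF v2]])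
    also have "\<dots> = (\<Sum>\<^sub>\<infinity>x. if x = y then v x else 0)"
      by (rule infsum_cong) (simp add: L delta_def)
    finally show ?thesis by (simp add: infsum_single_point)
  qed
  then show ?thesis unfolding green_eq_def using G2 by blast
qed

lemma infsum_grad_delta:
  fixes c :: "'d::finite \<Rightarrow> 'd site \<Rightarrow> real"
  shows "(\<Sum>\<^sub>\<infinity>x. (\<Sum>i\<in>UNIV. grad (delta p) x i * c i x)) = (\<Sum>i\<in>UNIV. c i (p - unitv i) - c i p)"
proof -
  define g where "g i x = (if x = p - unitv i then c i x else 0) - (if x = p then c i x else 0)" for i x
  have g: "grad (delta p) x i * c i x = g i x" for x i
  proof -
    have "delta p (x + unitv i) = (if x = p - unitv i then 1 else 0)" by (auto simp: delta_def)
    then show ?thesis unfolding grad_def g_def by (auto simp: delta_def)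
  qed
  have gs: "g i summable_on UNIV" for i
    unfolding g_def by (rule summable_on_diff[OF summable_on_single_point summable_on_single_point])
  have "(\<Sum>\<^sub>\<infinity>x. (\<Sum>i\<in>UNIV. g i x)) = (\<Sum>i\<in>UNIV. (\<Sum>\<^sub>\<infinity>x. g i x))"
    by (rule infsum_sum) (use gs in auto)
  also have "\<dots> = (\<Sum>i\<in>UNIV. c i (p - unitv i) - c i p)"
    unfolding g_def
    by (simp add: infsum_diff[OF summable_on_single_point summable_on_single_point] infsum_single_point)
  finally show ?thesis by (simp add: g)
qed

text \<open>Testing the weak equation with \<open>v = \<delta>\<^sub>x\<close> recovers the pointwise equation at \<open>x\<close>.\<close>

lemma green_eq_imp_point_source_solution:
  fixes a :: "'d::finite cond"
  assumes ge: "green_eq T a y G"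
  shows "bounded (range G) \<and> (\<forall>x. massive_op T a G x = delta y x)"
proof -
  have G2: "(\<lambda>x. (G x)\<^sup>2) summable_on UNIV" using ge unfolding green_eq_def by blast
  have Gb: "bounded (range G)" unfolding bounded_range_real_iff using l2_summable_bounded[OF G2] by blast
  have "massive_op T a G p = delta y p" for p
  proof -
    have "(\<lambda>x. (delta p x)\<^sup>2) = (\<lambda>x. if x = p then 1 else 0)" by (auto simp: delta_def)
    then have "(\<lambda>x. (delta p x)\<^sup>2) summable_on UNIV" using summable_on_single_point[of p "\<lambda>_. 1::real"] by simp
    then have weak: "(\<Sum>\<^sub>\<infinity>x. G x * delta p x / T)
        + (\<Sum>\<^sub>\<infinity>x. (\<Sum>i\<in>UNIV. grad (delta p) x i * (a x i * grad G x i))) = delta p y"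
      using ge unfolding green_eq_def by (simp add: mult.assoc)
    have "(\<Sum>\<^sub>\<infinity>x. G x * delta p x / T) = (\<Sum>\<^sub>\<infinity>x. if x = p then G x / T else 0)"
      by (rule infsum_cong) (simp add: delta_def)
    then have "G p / T + (\<Sum>i\<in>UNIV. a (p - unitv i) i * grad G (p - unitv i) i - a p i * grad G p i) = delta p y"
      using weak by (simp add: infsum_single_point infsum_grad_delta)
    then show ?thesis
      unfolding massive_op_def divstar_def by (simp add: sum_subtractf delta_def eq_commute)
  qed
  then show ?thesis using Gb by blast
qed

lemma green_eq_point_source_solution:
  fixes a :: "'d::finite cond"
  assumes T: "T > 0" and a: "\<And>y j. 0 \<le> a y j \<and> a y j \<le> B"
    and Gb: "bounded (range G)" and L: "\<And>x. massive_op T a G x = delta y x"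
  shows "green T a x y = G x"
proof -
  have "(THE G. green_eq T a y G) = G"
  proof (rule the_equality)
    show "green_eq T a y G" by (rule green_eq_of_point_source_solution[OF T a Gb L])
    fix G' assume "green_eq T a y G'"
    then have "bounded (range G')" "\<And>x. massive_op T a G' x = delta y x"
      using green_eq_imp_point_source_solution by blast+
    then show "G' = G" using massive_op_bounded_unique[where a=a and B=B, OF T a _ Gb] L by metis
  qed
  then show ?thesis unfolding green_def by simp
qed

text \<open>Symmetry: test the weak equation for the pole \<open>x\<close> with \<open>G(\<cdot>, w)\<close> and vice versa; the
  bilinear forms agree because \<open>A\<close> is diagonal.\<close>

lemma green_sym:
  fixes a :: "'d::finite cond"
  assumes T: "T > 0" and a: "\<And>y j. 0 \<le> a y j \<and> a y j \<le> B"
  shows "green T a x w = green T a w x"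
proof -
  obtain Gx where Gx: "bounded (range Gx)" "\<And>z. massive_op T a Gx z = delta x z"
    using point_source_solution_exists[where a=a and B=B, OF T a] by blast
  obtain Gw where Gw: "bounded (range Gw)" "\<And>z. massive_op T a Gw z = delta w z"
    using point_source_solution_exists[where a=a and B=B, OF T a] by blast
  have ex: "green_eq T a x Gx" by (rule green_eq_of_point_source_solution[OF T a Gx])
  have ew: "green_eq T a w Gw" by (rule green_eq_of_point_source_solution[OF T a Gw])
  have "(\<Sum>\<^sub>\<infinity>z. Gx z * Gw z / T) + (\<Sum>\<^sub>\<infinity>z. (\<Sum>i\<in>UNIV. grad Gw z i * a z i * grad Gx z i)) = Gw x"
    using ex ew unfolding green_eq_def by blast
  moreover have "(\<Sum>\<^sub>\<infinity>z. Gw z * Gx z / T) + (\<Sum>\<^sub>\<infinity>z. (\<Sum>i\<in>UNIV. grad Gx z i * a z i * grad Gw z i)) = Gx w"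
    using ex ew unfolding green_eq_def by blast
  ultimately have "Gw x = Gx w" by (simp add: mult.commute mult.left_commute)
  moreover have "green T a x w = Gw x" by (rule green_eq_point_source_solution[OF T a Gw])
  moreover have "green T a w x = Gx w" by (rule green_eq_point_source_solution[OF T a Gx])
  ultimately show ?thesis by simp
qed

lemma corr_eq_iff_massive_op:
  "corr_eq T c \<xi> \<phi> \<longleftrightarrow> bounded (range \<phi>) \<and> (\<forall>x. massive_op T c \<phi> x = divstar (\<lambda>y j. c y j * \<xi> $ j) x)"
proof -
  have "\<phi> x / T - divstar (\<lambda>y i. c y i * (grad \<phi> y i + \<xi> $ i)) x
      = massive_op T c \<phi> x - divstar (\<lambda>y j. c y j * \<xi> $ j) x" for x
    unfolding massive_op_def divstar_def by (simp add: algebra_simps sum.distrib sum_subtractf)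
  then show ?thesis unfolding corr_eq_def by simp
qed

lemma corrector_bounded_solution:
  fixes c :: "'d::finite cond"
  assumes T: "T > 0" and c: "\<And>y j. 0 \<le> c y j \<and> c y j \<le> B" and xi: "\<And>j. \<bar>\<xi> $ j\<bar> \<le> 1"
  shows "bounded (range (corrector T c \<xi>))"
    and "massive_op T c (corrector T c \<xi>) x = divstar (\<lambda>y j. c y j * \<xi> $ j) x"
proof -
  have "\<bar>c y j * \<xi> $ j\<bar> \<le> B" for y j
    using c[of y j] xi[of j] by (simp add: abs_mult) (metis abs_ge_zero mult_le_one mult.commute mult_right_le_one_le order_trans)
  then have "\<bar>c p j * \<xi> $ j - c (p - unitv j) j * \<xi> $ j\<bar> \<le> 2 * B" for p j
    by (metis abs_triangle_ineq4 add_mono mult_2 order_trans)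
  then have fb: "\<bar>divstar (\<lambda>y j. c y j * \<xi> $ j) p\<bar> \<le> (\<Sum>j\<in>(UNIV::'d set). 2 * B)" for p
    unfolding divstar_def by (intro order_trans[OF sum_abs] sum_mono)
  obtain \<phi> where \<phi>: "\<forall>x. \<bar>\<phi> x\<bar> \<le> T * (\<Sum>j\<in>(UNIV::'d set). 2 * B)"
      "\<forall>x. massive_op T c \<phi> x = divstar (\<lambda>y j. c y j * \<xi> $ j) x"
    using massive_op_bounded_solvable[where a=c and B=B and f="divstar (\<lambda>y j. c y j * \<xi> $ j)", OF T c fb]
    by blast
  have \<phi>b: "bounded (range \<phi>)" using \<phi>(1) by (auto simp: bounded_range_real_iff)
  have "corrector T c \<xi> = \<phi>"
    unfolding corrector_def
  proof (rule the_equality)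
    show "corr_eq T c \<xi> \<phi>" unfolding corr_eq_iff_massive_op using \<phi>b \<phi>(2) by blast
    show "\<psi> = \<phi>" if "corr_eq T c \<xi> \<psi>" for \<psi>
      using that massive_op_bounded_unique[where a=c and B=B, OF T c _ \<phi>b] \<phi>(2)
      unfolding corr_eq_iff_massive_op by metis
  qed
  then show "bounded (range (corrector T c \<xi>))"
    and "massive_op T c (corrector T c \<xi>) x = divstar (\<lambda>y j. c y j * \<xi> $ j) x"
    using \<phi>b \<phi>(2) by simp_all
qed

lemma cond_upd_apply: "cond_upd a z i s y j = (if y = z \<and> j = i then s else a y j)"
  by (simp add: cond_upd_def)

lemma divstar_cond_upd:
  fixes a :: "'d::finite cond"
  shows "divstar (\<lambda>y j. cond_upd a z i s y j * g y j) x
       = divstar (\<lambda>y j. a y j * g y j) x + (s - a z i) * g z i * (delta z x - delta (z + unitv i) x)"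
proof -
  define K where "K = (s - a z i) * g z i"
  have upd: "(\<lambda>y j. cond_upd a z i s y j * g y j)
      = (\<lambda>y j. a y j * g y j + (if y = z \<and> j = i then K else 0))"
    by (auto simp: cond_upd_apply fun_eq_iff algebra_simps K_def)
  have "(\<Sum>j\<in>(UNIV::'d set). if x = z \<and> j = i then K else 0)
      = (\<Sum>j\<in>UNIV. if j = i then (if x = z then K else 0) else 0)"
    by (rule sum.cong) auto
  also have "\<dots> = K * delta z x" by (simp add: delta_def)
  finally have at_z: "(\<Sum>j\<in>(UNIV::'d set). if x = z \<and> j = i then K else 0) = K * delta z x" .
  have "(\<Sum>j\<in>(UNIV::'d set). if x - unitv j = z \<and> j = i then K else 0)
      = (\<Sum>j\<in>UNIV. if j = i then (if x = z + unitv i then K else 0) else 0)"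
    by (rule sum.cong) auto
  also have "\<dots> = K * delta (z + unitv i) x" by (simp add: delta_def)
  finally have at_ze: "(\<Sum>j\<in>(UNIV::'d set). if x - unitv j = z \<and> j = i then K else 0)
      = K * delta (z + unitv i) x" .
  have "divstar (\<lambda>y j. cond_upd a z i s y j * g y j) x
     = divstar (\<lambda>y j. a y j * g y j) x + (K * delta z x - K * delta (z + unitv i) x)"
    unfolding upd divstar_def at_z[symmetric] at_ze[symmetric] by (simp only: sum.distrib sum_subtractf)
  then show ?thesis by (simp add: K_def algebra_simps)
qed

lemma massive_op_cond_upd:
  "massive_op T (cond_upd a z i s) u x
     = massive_op T a u x - (s - a z i) * grad u z i * (delta z x - delta (z + unitv i) x)"
  unfolding massive_op_def using divstar_cond_upd[of a z i s "grad u" x] by simp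

text \<open>By symmetry of the Green's function, \<open>x \<mapsto> \<nabla>\<^sub>z\<^sub>iG(z, x)\<close> solves the equation with
  the dipole \<open>\<delta>(z + e\<^sub>i) - \<delta>(z)\<close> on the right.\<close>

lemma green_grad_dipole_solution:
  fixes a :: "'d::finite cond" and z :: "'d site" and i :: 'd
  assumes T: "T > 0" and a: "\<And>y j. 0 \<le> a y j \<and> a y j \<le> B"
  defines "F \<equiv> \<lambda>x. grad (\<lambda>w. green T a w x) z i"
  shows "bounded (range F)" and "F summable_on UNIV"
    and "massive_op T a F x = delta (z + unitv i) x - delta z x"
proof -
  obtain G0 where G0: "bounded (range G0)" "\<And>x. massive_op T a G0 x = delta z x"
    using point_source_solution_exists[where a=a and B=B, OF T a] by blast
  obtain G1 where G1: "bounded (range G1)" "\<And>x. massive_op T a G1 x = delta (z + unitv i) x"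
    using point_source_solution_exists[where a=a and B=B, OF T a] by blast
  have "F x = green T a x (z + unitv i) - green T a x z" for x
    unfolding F_def grad_def using green_sym[where a=a and B=B, OF T a] by metis
  then have F: "F = (\<lambda>x. G1 x - G0 x)"
    using green_eq_point_source_solution[OF T a G0] green_eq_point_source_solution[OF T a G1] by auto
  show "bounded (range F)" unfolding F by (rule bounded_range_diff[OF G1(1) G0(1)])
  show "F summable_on UNIV" unfolding F
    by (rule summable_on_diff[OF point_source_solution_summable[OF T a G1] point_source_solution_summable[OF T a G0]])
  show "massive_op T a F x = delta (z + unitv i) x - delta z x"
    unfolding F massive_op_diff G0(2) G1(2) ..
qed

text \<open>Testing the dipole equation with \<open>F\<close> itself gives the energy identity
  \<open>T\<^sup>-\<^sup>1 \<Sum> F\<^sup>2 + \<Sum> a |\<nabla>F|\<^sup>2 = D\<close>, whose left side dominates \<open>a(e) D\<^sup>2\<close>.\<close>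

lemma green_mixed_grad_bounds:
  fixes a :: "'d::finite cond" and z :: "'d site" and i :: 'd
  assumes T: "T > 0" and a: "\<And>y j. 0 \<le> a y j \<and> a y j \<le> B"
  defines "D \<equiv> grad (\<lambda>x. grad (\<lambda>w. green T a w x) z i) z i"
  shows "0 \<le> D" and "a z i * D \<le> 1"
proof -
  define F where "F = (\<lambda>x. grad (\<lambda>w. green T a w x) z i)"
  note F = green_grad_dipole_solution[where a=a and B=B and z=z and i=i, OF T a, folded F_def]
  obtain K where K: "\<And>x. \<bar>F x\<bar> \<le> K" using F(1) by (auto simp: bounded_range_real_iff)
  define Q where "Q = (\<Sum>\<^sub>\<infinity>x. (\<Sum>j\<in>UNIV. grad F x j * a x j * grad F x j))"
  define P where "P = (\<Sum>\<^sub>\<infinity>x. F x * F x / T)"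
  have "P + Q = (\<Sum>\<^sub>\<infinity>x. F x * massive_op T a F x)"
    unfolding P_def Q_def by (rule massive_op_summation_by_parts[OF a F(2) K])
  also have "\<dots> = (\<Sum>\<^sub>\<infinity>x. (if x = z + unitv i then F x else 0) - (if x = z then F x else 0))"
    by (rule infsum_cong) (simp add: F(3) delta_def algebra_simps)
  also have "\<dots> = D"
    by (simp add: infsum_diff[OF summable_on_single_point summable_on_single_point] infsum_single_point
        D_def F_def grad_def)
  finally have PQ: "P + Q = D" .
  have P0: "P \<ge> 0" unfolding P_def by (rule infsum_nonneg) (use T in simp)
  have energy_nonneg: "0 \<le> grad F x j * a x j * grad F x j" for x j
    using a[of x j] by (simp add: mult.commute mult.left_commute)
  have gFs: "(\<lambda>x. grad F x j) summable_on UNIV" for j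
    unfolding grad_def by (rule summable_on_diff[OF summable_on_translate[OF F(2)] F(2)])
  have gFb: "\<bar>grad F x j\<bar> \<le> 2 * K" for x j
    unfolding grad_def mult_2 by (rule order_trans[OF abs_triangle_ineq4 add_mono[OF K K]])
  have ab: "\<bar>a x j\<bar> \<le> B" for x j using a[of x j] by simp
  have "(\<lambda>x. grad F x j * (a x j * grad F x j)) summable_on UNIV" for j
    by (rule summable_on_bounded_mult[OF summable_on_bounded_mult[OF gFs ab] gFb])
  then have Qs: "(\<lambda>x. \<Sum>j\<in>UNIV. grad F x j * a x j * grad F x j) summable_on UNIV"
    by (intro summable_on_sum) (simp_all add: mult.assoc)
  have "a z i * D\<^sup>2 = grad F z i * a z i * grad F z i" unfolding D_def F_def by (simp add: power2_eq_square)
  also have "\<dots> \<le> (\<Sum>j\<in>UNIV. grad F z j * a z j * grad F z j)"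
    by (rule member_le_sum) (use energy_nonneg in auto)
  also have "\<dots> \<le> Q" unfolding Q_def
    by (rule nonneg_le_infsum[OF Qs]) (simp add: energy_nonneg sum_nonneg)
  finally have QD: "a z i * D\<^sup>2 \<le> Q" .
  have Q0: "Q \<ge> 0" unfolding Q_def by (rule infsum_nonneg) (simp add: energy_nonneg sum_nonneg)
  show D0: "0 \<le> D" using PQ P0 Q0 by linarith
  have "a z i * D * D \<le> D" using PQ P0 QD by (simp add: power2_eq_square)
  then show "a z i * D \<le> 1"
  proof (cases "D = 0")
    case False
    then show ?thesis using D0 \<open>a z i * D * D \<le> D\<close> by (metis mult_le_cancel_right2 order_le_less)
  qed simp
qed

text \<open>\<open>\<phi>\<^sub>s - \<phi> + (s - a(e)) (\<nabla>\<^sub>i\<phi>\<^sub>s(z) + \<xi>\<^sub>i) \<nabla>\<^sub>z\<^sub>iG(z, \<cdot>)\<close> is bounded and annihilated by the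
  unperturbed operator, hence zero by the maximum principle.\<close>

lemma corrector_cond_upd_rank_one:
  fixes a :: "'d::finite cond" and z :: "'d site" and i :: 'd and \<xi> :: "real ^ 'd"
  assumes T: "T > 0" and a: "\<And>y j. 0 \<le> a y j \<and> a y j \<le> B" and xi: "\<And>j. \<bar>\<xi> $ j\<bar> \<le> 1"
    and s: "0 \<le> s"
  defines "\<phi> \<equiv> corrector T a \<xi>" and "\<phi>\<^sub>s \<equiv> corrector T (cond_upd a z i s) \<xi>"
  shows "\<phi>\<^sub>s x = \<phi> x - (s - a z i) * (grad \<phi>\<^sub>s z i + \<xi> $ i) * grad (\<lambda>w. green T a w x) z i"
proof -
  define F where "F = (\<lambda>x. grad (\<lambda>w. green T a w x) z i)"
  define c where "c = (s - a z i) * (grad \<phi>\<^sub>s z i + \<xi> $ i)"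
  note F = green_grad_dipole_solution[where a=a and B=B and z=z and i=i, OF T a, folded F_def]
  have as: "0 \<le> cond_upd a z i s y j \<and> cond_upd a z i s y j \<le> max B s" for y j
    unfolding cond_upd_apply using a[of y j] s by auto
  note \<phi>\<^sub>s = corrector_bounded_solution[where c="cond_upd a z i s" and B="max B s", OF T as xi, folded \<phi>\<^sub>s_def]
  note \<phi> = corrector_bounded_solution[where c=a and B=B, OF T a xi, folded \<phi>_def]
  define w where "w x = (\<phi>\<^sub>s x - \<phi> x) + c * F x" for x
  have "massive_op T a w x = 0" for x
  proof -
    have "massive_op T a w x = massive_op T a \<phi>\<^sub>s x - massive_op T a \<phi> x + c * massive_op T a F x"
      unfolding w_def using massive_op_lincomb[of T a 1 "\<lambda>x. \<phi>\<^sub>s x - \<phi> x" c F x] by (simp add: massive_op_diff)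
    also have "massive_op T a \<phi>\<^sub>s x
        = massive_op T (cond_upd a z i s) \<phi>\<^sub>s x + (s - a z i) * grad \<phi>\<^sub>s z i * (delta z x - delta (z + unitv i) x)"
      unfolding massive_op_cond_upd by simp
    also have "massive_op T (cond_upd a z i s) \<phi>\<^sub>s x
        = divstar (\<lambda>y j. a y j * \<xi> $ j) x + (s - a z i) * \<xi> $ i * (delta z x - delta (z + unitv i) x)"
      unfolding \<phi>\<^sub>s(2) by (rule divstar_cond_upd)
    finally show ?thesis unfolding \<phi>(2) F(3) c_def by (simp add: algebra_simps)
  qed
  moreover have "bounded (range w)"
  proof -
    obtain K where "\<And>x. \<bar>F x\<bar> \<le> K" using F(1) by (auto simp: bounded_range_real_iff)
    then have "bounded (range (\<lambda>x. c * F x))"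
      unfolding bounded_range_real_iff abs_mult by (metis abs_ge_zero mult_left_mono)
    then show ?thesis unfolding w_def
      using bounded_range_diff[OF bounded_range_diff[OF \<phi>\<^sub>s(1) \<phi>(1)], of "\<lambda>x. - c * F x"]
      by (auto simp: bounded_range_real_iff)
  qed
  ultimately have "w = (\<lambda>_. 0)"
    using massive_op_bounded_unique[where a=a and B=B, OF T a, of w "\<lambda>_. 0"] massive_op_zero
    by (auto simp: bounded_range_real_iff)
  then show ?thesis unfolding w_def c_def F_def by (simp add: fun_eq_iff algebra_simps)
qed

lemma rank_one_denominator_pos:
  fixes a D s :: real
  assumes "0 \<le> D" "a * D \<le> 1" "0 < s"
  shows "0 < 1 + (s - a) * D"
proof (cases "D = 0")
  case False
  then have "0 < s * D" using assms by simp
  moreover have "1 + (s - a) * D = (1 - a * D) + s * D" by (simp add: algebra_simps)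
  ultimately show ?thesis using assms(2) by linarith
qed simp

lemma rank_one_denominator_lower:
  fixes \<alpha> \<beta> a t D :: real
  assumes \<alpha>: "0 < \<alpha>" and a: "\<alpha> \<le> a" "a \<le> \<beta>" and t: "\<alpha> \<le> t" "t \<le> \<beta>"
    and D: "0 \<le> D" "a * D \<le> 1"
  shows "\<alpha> / \<beta> \<le> 1 + (t - a) * D"
proof (cases "t \<ge> a")
  case True
  have "\<alpha> / \<beta> \<le> 1" using \<alpha> a by simp
  moreover have "0 \<le> (t - a) * D" using True D by simp
  ultimately show ?thesis by linarith
next
  case False
  have "(a - t) * (a * D) \<le> (a - t) * 1" using False D by (intro mult_left_mono) auto
  then have "1 + (t - a) * D \<ge> t / a" using \<alpha> a by (simp add: field_simps)
  moreover have "\<alpha> / \<beta> \<le> t / a" using \<alpha> a t by (simp add: frac_le)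
  ultimately show ?thesis by linarith
qed

lemma corrector_cond_upd_explicit:
  fixes a :: "'d::finite cond" and z :: "'d site" and i :: 'd and \<xi> :: "real ^ 'd"
  assumes T: "T > 0" and a: "\<And>y j. 0 \<le> a y j \<and> a y j \<le> B" and xi: "\<And>j. \<bar>\<xi> $ j\<bar> \<le> 1"
    and s: "0 < s"
  defines "D \<equiv> grad (\<lambda>x. grad (\<lambda>w. green T a w x) z i) z i"
    and "c \<equiv> grad (corrector T a \<xi>) z i + \<xi> $ i"
  shows "grad (corrector T (cond_upd a z i s) \<xi>) z i + \<xi> $ i = c / (1 + (s - a z i) * D)"
    and "corrector T (cond_upd a z i s) \<xi> x
       = corrector T a \<xi> x - (s - a z i) * (c / (1 + (s - a z i) * D)) * grad (\<lambda>w. green T a w x) z i"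
proof -
  define \<phi>\<^sub>s where "\<phi>\<^sub>s = corrector T (cond_upd a z i s) \<xi>"
  define c\<^sub>s where "c\<^sub>s = grad \<phi>\<^sub>s z i + \<xi> $ i"
  note rank_one = corrector_cond_upd_rank_one[where a=a and B=B and z=z and i=i,
      OF T a xi less_imp_le[OF s], folded \<phi>\<^sub>s_def c\<^sub>s_def]
  have "grad \<phi>\<^sub>s z i = grad (corrector T a \<xi>) z i - (s - a z i) * c\<^sub>s * D"
    using rank_one[of "z + unitv i"] rank_one[of z] by (simp add: grad_def D_def algebra_simps)
  then have "c\<^sub>s * (1 + (s - a z i) * D) = c" unfolding c\<^sub>s_def c_def by (simp add: algebra_simps)
  moreover have "0 < 1 + (s - a z i) * D"
    using green_mixed_grad_bounds[where a=a and B=B and z=z and i=i, OF T a] s by (intro rank_one_denominator_pos) (simp_all add: D_def)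
  ultimately have cs: "c\<^sub>s = c / (1 + (s - a z i) * D)" by (simp add: field_simps)
  then show "grad (corrector T (cond_upd a z i s) \<xi>) z i + \<xi> $ i = c / (1 + (s - a z i) * D)"
    unfolding c\<^sub>s_def \<phi>\<^sub>s_def .
  show "corrector T (cond_upd a z i s) \<xi> x
      = corrector T a \<xi> x - (s - a z i) * (c / (1 + (s - a z i) * D)) * grad (\<lambda>w. green T a w x) z i"
    using rank_one[of x] unfolding cs \<phi>\<^sub>s_def .
qed

lemma conductivity_bounds:
  assumes "conductivity \<alpha> \<beta> a"
  shows "\<alpha> \<le> a y j" and "a y j \<le> \<beta>"
  using assms unfolding conductivity_def by blast+

lemma unit_vector_component_bound:
  fixes \<xi> :: "real ^ 'd::finite"
  assumes "norm \<xi> = 1"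
  shows "\<bar>\<xi> $ j\<bar> \<le> 1"
  using component_le_norm_cart[of \<xi> j] assms by simp

lemma rank_one_update_has_derivative:
  fixes u b D c f :: real
  assumes q: "1 + (t - b) * D \<noteq> 0"
  shows "((\<lambda>s. u - (s - b) * (c / (1 + (s - b) * D)) * f)
           has_real_derivative (- c * f / (1 + (t - b) * D)\<^sup>2)) (at t)"
proof -
  have eq: "(\<lambda>s. u - (s - b) * (c / (1 + (s - b) * D)) * f)
      = (\<lambda>s. u - (c * f) * ((s - b) / (1 + (s - b) * D)))"
    by (simp add: fun_eq_iff field_simps)
  have d1: "((\<lambda>s. s - b) has_real_derivative 1) (at t)"
    and d2: "((\<lambda>s. 1 + (s - b) * D) has_real_derivative D) (at t)"
    by (auto intro!: derivative_eq_intros)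
  have "((\<lambda>s. (s - b) / (1 + (s - b) * D)) has_real_derivative
      ((1 * (1 + (t - b) * D) - (t - b) * D) / ((1 + (t - b) * D) * (1 + (t - b) * D)))) (at t)"
    by (rule DERIV_divide[OF d1 d2 q])
  from DERIV_diff[OF DERIV_const[of u] DERIV_cmult[OF this, of "c * f"]] show ?thesis
    unfolding eq by (simp add: power2_eq_square)
qed

lemma corrector_cond_upd_has_derivative:
  fixes a :: "'d::finite cond" and z :: "'d site" and i :: 'd and \<xi> :: "real ^ 'd"
  assumes \<alpha>: "0 < \<alpha>" and a: "conductivity \<alpha> \<beta> a" and T: "T > 0" and \<xi>: "norm \<xi> = 1"
  shows "((\<lambda>t. corrector T (cond_upd a z i t) \<xi> x) has_real_derivative
           (- (grad (corrector T a \<xi>) z i + \<xi> $ i) * grad (\<lambda>w. green T a w x) z i)) (at (a z i))"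
proof -
  have a0: "0 \<le> a y j \<and> a y j \<le> \<beta>" for y j
    using conductivity_bounds[OF a] \<alpha> by (meson less_imp_le order_trans)
  note explicit = corrector_cond_upd_explicit(2)[where a=a and B=\<beta> and z=z and i=i and x=x,
      OF T a0 unit_vector_component_bound[OF \<xi>]]
  define c where "c = grad (corrector T a \<xi>) z i + \<xi> $ i"
  define f where "f = grad (\<lambda>w. green T a w x) z i"
  define D where "D = grad (\<lambda>x. grad (\<lambda>w. green T a w x) z i) z i"
  have "a z i > 0" using conductivity_bounds[OF a] \<alpha> by (meson less_le_trans)
  have "((\<lambda>s. corrector T a \<xi> x - (s - a z i) * (c / (1 + (s - a z i) * D)) * f)
      has_real_derivative (- c * f)) (at (a z i))"
    using rank_one_update_has_derivative[where t="a z i" and b="a z i" and D=D and c=c and f=f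
        and u="corrector T a \<xi> x"] by simp
  then have "((\<lambda>t. corrector T (cond_upd a z i t) \<xi> x) has_real_derivative (- c * f)) (at (a z i))"
    by (rule has_field_derivative_transform_within_open[where S="{0<..}"])
      (use \<open>a z i > 0\<close> explicit in \<open>auto simp: c_def f_def D_def\<close>)
  then show ?thesis by (simp add: c_def f_def)
qed

lemma rank_one_quotient_bound:
  fixes c g q r :: real
  assumes "\<bar>c\<bar> \<le> g" "0 < r" "r \<le> q"
  shows "\<bar>c / q\<bar> \<le> g / r"
proof -
  have "\<bar>c / q\<bar> = \<bar>c\<bar> / q" using assms by simp
  also have "\<dots> \<le> g / q" using assms by (intro divide_right_mono) auto
  also have "\<dots> \<le> g / r" using assms by (intro divide_left_mono) auto
  finally show ?thesis .
qed

lemma corrector_grad_cond_upd_bound: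
  fixes a :: "'d::finite cond" and z :: "'d site" and i :: 'd and \<xi> :: "real ^ 'd"
  assumes \<alpha>: "0 < \<alpha>" and a: "conductivity \<alpha> \<beta> a" and T: "T > 0" and \<xi>: "norm \<xi> = 1"
    and t: "t \<in> {\<alpha>..\<beta>}"
  shows "\<bar>grad (corrector T (cond_upd a z i t) \<xi>) z i\<bar>
           \<le> (\<beta> / \<alpha> + 1) * (\<bar>grad (corrector T a \<xi>) z i\<bar> + 1)"
proof -
  define D where "D = grad (\<lambda>x. grad (\<lambda>w. green T a w x) z i) z i"
  define c where "c = grad (corrector T a \<xi>) z i + \<xi> $ i"
  define g where "g = \<bar>grad (corrector T a \<xi>) z i\<bar> + 1"
  have a0: "0 \<le> a y j \<and> a y j \<le> \<beta>" for y j
    using conductivity_bounds[OF a] \<alpha> by (meson less_imp_le order_trans)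
  have \<xi>i: "\<bar>\<xi> $ i\<bar> \<le> 1" by (rule unit_vector_component_bound[OF \<xi>])
  have \<beta>: "\<alpha> \<le> \<beta>" using t by simp
  have "\<alpha> / \<beta> \<le> 1 + (t - a z i) * D"
    using green_mixed_grad_bounds[where a=a and B=\<beta> and z=z and i=i, OF T a0] conductivity_bounds[OF a] t \<alpha>
    by (intro rank_one_denominator_lower) (auto simp: D_def)
  then have "\<bar>c / (1 + (t - a z i) * D)\<bar> \<le> g / (\<alpha> / \<beta>)"
    using \<xi>i \<alpha> \<beta> by (intro rank_one_quotient_bound) (auto simp: c_def g_def)
  moreover have "grad (corrector T (cond_upd a z i t) \<xi>) z i = c / (1 + (t - a z i) * D) - \<xi> $ i"
    using corrector_cond_upd_explicit(1)[where a=a and B=\<beta> and s=t and z=z and i=i,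
        OF T a0 unit_vector_component_bound[OF \<xi>]] t \<alpha>
    by (simp add: c_def D_def eq_diff_eq)
  ultimately have "\<bar>grad (corrector T (cond_upd a z i t) \<xi>) z i\<bar> \<le> g / (\<alpha> / \<beta>) + \<bar>\<xi> $ i\<bar>"
    by (metis abs_triangle_ineq4 add_right_mono order_trans)
  also have "\<dots> \<le> (\<beta> / \<alpha>) * g + 1" using \<xi>i by (simp add: mult.commute)
  also have "\<dots> \<le> (\<beta> / \<alpha> + 1) * g" by (simp add: g_def algebra_simps)
  finally show ?thesis unfolding g_def .
qed

lemma power_add_le_two_power:
  fixes x y :: real
  assumes "0 \<le> x" "0 \<le> y"
  shows "(x + y) ^ n \<le> 2 ^ n * (x ^ n + y ^ n)"
proof -
  have "(x + y) ^ n \<le> (2 * max x y) ^ n" using assms by (intro power_mono) auto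
  also have "\<dots> = 2 ^ n * (max x y) ^ n" by (simp add: power_mult_distrib)
  also have "(max x y) ^ n \<le> x ^ n + y ^ n"
    using assms by (cases "x \<le> y") (auto simp: max_def)
  then have "2 ^ n * (max x y) ^ n \<le> 2 ^ n * (x ^ n + y ^ n)" by simp
  finally show ?thesis .
qed

lemma power_deriv_estimate:
  fixes P P' A K g H r :: real
  assumes P: "\<bar>P\<bar> \<le> A + K * g * H" and P': "\<bar>P'\<bar> \<le> g * H / r\<^sup>2"
    and nonneg: "A \<ge> 0" "K \<ge> 0" "g \<ge> 0" "H \<ge> 0"
  shows "\<bar>(1 + real n) * (P' * P ^ n)\<bar>
           \<le> ((real n + 1) * 2 ^ n * (1 + K ^ n) / r\<^sup>2) * (A ^ n * g * H + g ^ (n + 1) * H ^ (n + 1))"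
proof -
  have "\<bar>P\<bar> ^ n \<le> (A + K * g * H) ^ n" using P by (intro power_mono) auto
  also have "\<dots> \<le> 2 ^ n * (A ^ n + (K * g * H) ^ n)"
    using nonneg by (intro power_add_le_two_power) auto
  finally have Pn: "\<bar>P\<bar> ^ n \<le> 2 ^ n * (A ^ n + (K * g * H) ^ n)" .
  have "\<bar>(1 + real n) * (P' * P ^ n)\<bar> = (1 + real n) * (\<bar>P'\<bar> * \<bar>P\<bar> ^ n)"
    by (simp add: abs_mult power_abs)
  also have "\<dots> \<le> (1 + real n) * ((g * H / r\<^sup>2) * (2 ^ n * (A ^ n + (K * g * H) ^ n)))"
    using P' Pn by (intro mult_left_mono mult_mono) auto
  also have "\<dots> = ((real n + 1) * 2 ^ n / r\<^sup>2) * (A ^ n * g * H + K ^ n * (g ^ (n + 1) * H ^ (n + 1)))"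
    by (simp add: field_simps power_mult_distrib)
  also have "\<dots> \<le> ((real n + 1) * 2 ^ n / r\<^sup>2) * ((1 + K ^ n) * (A ^ n * g * H + g ^ (n + 1) * H ^ (n + 1)))"
  proof (rule mult_left_mono)
    have "0 \<le> K ^ n * (A ^ n * g * H)" "0 \<le> g ^ (n + 1) * H ^ (n + 1)" using nonneg by simp_all
    then show "A ^ n * g * H + K ^ n * (g ^ (n + 1) * H ^ (n + 1))
        \<le> (1 + K ^ n) * (A ^ n * g * H + g ^ (n + 1) * H ^ (n + 1))"
      by (simp add: algebra_simps)
  qed simp
  finally show ?thesis by (simp add: field_simps)
qed

lemma corrector_power_deriv_bound:
  fixes a :: "'d::finite cond" and z x :: "'d site" and i :: 'd and \<xi> :: "real ^ 'd"
  assumes \<alpha>: "0 < \<alpha>" and a: "conductivity \<alpha> \<beta> a" and T: "T > 0" and \<xi>: "norm \<xi> = 1"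
    and t: "t \<in> {\<alpha>..\<beta>}"
  defines "r \<equiv> \<alpha> / \<beta>"
    and "\<phi> \<equiv> corrector T a \<xi>" and "H \<equiv> \<bar>grad (\<lambda>w. green T a w x) z i\<bar>"
  shows "\<bar>deriv (\<lambda>s. (corrector T (cond_upd a z i s) \<xi> x) ^ (n + 1)) t\<bar>
           \<le> ((real n + 1) * 2 ^ n * (1 + ((\<beta> - \<alpha>) / r) ^ n) / r\<^sup>2)
              * (\<bar>\<phi> x\<bar> ^ n * (\<bar>grad \<phi> z i\<bar> + 1) * H + (\<bar>grad \<phi> z i\<bar> + 1) ^ (n + 1) * H ^ (n + 1))"
proof -
  define D where "D = grad (\<lambda>x. grad (\<lambda>w. green T a w x) z i) z i"
  define c where "c = grad \<phi> z i + \<xi> $ i"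
  define f where "f = grad (\<lambda>w. green T a w x) z i"
  define g where "g = \<bar>grad \<phi> z i\<bar> + 1"
  define p where "p s = \<phi> x - (s - a z i) * (c / (1 + (s - a z i) * D)) * f" for s
  define q where "q = 1 + (t - a z i) * D"
  have a0: "0 \<le> a y j \<and> a y j \<le> \<beta>" for y j
    using conductivity_bounds[OF a] \<alpha> by (meson less_imp_le order_trans)
  have \<beta>: "\<alpha> \<le> \<beta>" using t by simp
  have r: "0 < r" unfolding r_def using \<alpha> \<beta> by simp
  have rq: "r \<le> q"
    using green_mixed_grad_bounds[where a=a and B=\<beta> and z=z and i=i, OF T a0] conductivity_bounds[OF a] t \<alpha>
    unfolding r_def q_def by (intro rank_one_denominator_lower) (auto simp: D_def)
  have cg: "\<bar>c\<bar> \<le> g" using unit_vector_component_bound[OF \<xi>, of i] by (simp add: c_def g_def abs_le_iff) linarith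
  have cq: "\<bar>c / q\<bar> \<le> g / r" by (rule rank_one_quotient_bound[OF cg r rq])
  have "(p has_real_derivative (- c * f / q\<^sup>2)) (at t)"
    unfolding p_def q_def by (rule rank_one_update_has_derivative) (use r rq q_def in simp)
  then have "((\<lambda>s. (corrector T (cond_upd a z i s) \<xi> x) ^ Suc n)
      has_real_derivative (1 + real n) * ((- c * f / q\<^sup>2) * p t ^ n)) (at t)"
  proof (rule has_field_derivative_transform_within_open[OF DERIV_power_Suc])
    show "p s ^ Suc n = corrector T (cond_upd a z i s) \<xi> x ^ Suc n" if "s \<in> {0<..}" for s
      using corrector_cond_upd_explicit(2)[where a=a and B=\<beta> and s=s, OF T a0 unit_vector_component_bound[OF \<xi>]] that
      by (simp add: p_def c_def D_def f_def \<phi>_def)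
  qed (use t \<alpha> in auto)
  then have deriv: "deriv (\<lambda>s. (corrector T (cond_upd a z i s) \<xi> x) ^ (n + 1)) t
      = (1 + real n) * ((- c * f / q\<^sup>2) * p t ^ n)"
    using DERIV_imp_deriv by simp
  have "\<bar>(t - a z i) * (c / q) * f\<bar> \<le> (\<beta> - \<alpha>) / r * g * H"
  proof -
    have "\<bar>t - a z i\<bar> \<le> \<beta> - \<alpha>" using conductivity_bounds[OF a, of z i] t by auto
    then have "\<bar>t - a z i\<bar> * \<bar>c / q\<bar> * H \<le> (\<beta> - \<alpha>) * (g / r) * H"
      using cq \<beta> by (intro mult_right_mono mult_mono) (auto simp: H_def)
    then show ?thesis by (simp add: abs_mult H_def f_def)
  qed
  then have pt: "\<bar>p t\<bar> \<le> \<bar>\<phi> x\<bar> + (\<beta> - \<alpha>) / r * g * H"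
    unfolding p_def q_def[symmetric] by (meson abs_triangle_ineq4 add_left_mono order_trans)
  have "\<bar>- c * f / q\<^sup>2\<bar> = \<bar>c / q\<bar> * H / q" using r rq by (simp add: H_def f_def abs_mult power2_eq_square)
  also have "\<dots> \<le> g / r * H / r"
    using cq r rq by (intro frac_le mult_right_mono) (auto simp: H_def g_def)
  finally have "\<bar>- c * f / q\<^sup>2\<bar> \<le> g * H / r\<^sup>2" by (simp add: power2_eq_square)
  moreover have "0 \<le> (\<beta> - \<alpha>) / r" using r \<beta> by simp
  ultimately have "\<bar>(1 + real n) * ((- c * f / q\<^sup>2) * p t ^ n)\<bar>
      \<le> ((real n + 1) * 2 ^ n * (1 + ((\<beta> - \<alpha>) / r) ^ n) / r\<^sup>2)
         * (\<bar>\<phi> x\<bar> ^ n * g * H + g ^ (n + 1) * H ^ (n + 1))"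
    by (intro power_deriv_estimate[OF pt]) (auto simp: g_def H_def)
  then show ?thesis unfolding deriv g_def .
qed

theorem lemma2p4:
  fixes \<alpha> \<beta> :: real
  assumes "0 < \<alpha>" and "\<alpha> \<le> \<beta>" and "CARD('d::finite) \<ge> 2"
  shows
   "(\<forall>(a::'d cond) T (\<xi>::real ^ 'd) z i x.
       conductivity \<alpha> \<beta> a \<and> T > 0 \<and> norm \<xi> = 1 \<longrightarrow>
       ((\<lambda>t. corrector T (cond_upd a z i t) \<xi> x) has_real_derivative
          (- (grad (corrector T a \<xi>) z i + \<xi> $ i) * grad (\<lambda>w. green T a w x) z i)) (at (a z i)))
    \<and> (\<forall>n::nat. \<exists>C>0. \<forall>(a::'d cond) T (\<xi>::real ^ 'd) z i x.
       conductivity \<alpha> \<beta> a \<and> T > 0 \<and> norm \<xi> = 1 \<longrightarrow>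
       (\<forall>t\<in>{\<alpha>..\<beta>}.
          \<bar>deriv (\<lambda>s. (corrector T (cond_upd a z i s) \<xi> x) ^ (n + 1)) t\<bar>
          \<le> C * (\<bar>corrector T a \<xi> x\<bar> ^ n * (\<bar>grad (corrector T a \<xi>) z i\<bar> + 1)
                   * \<bar>grad (\<lambda>w. green T a w x) z i\<bar>
                 + (\<bar>grad (corrector T a \<xi>) z i\<bar> + 1) ^ (n + 1)
                   * \<bar>grad (\<lambda>w. green T a w x) z i\<bar> ^ (n + 1))))
    \<and> (\<exists>C>0. \<forall>(a::'d cond) T (\<xi>::real ^ 'd) z i.
       conductivity \<alpha> \<beta> a \<and> T > 0 \<and> norm \<xi> = 1 \<longrightarrow>
       (\<forall>t\<in>{\<alpha>..\<beta>}.
          \<bar>grad (corrector T (cond_upd a z i t) \<xi>) z i\<bar>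
          \<le> C * (\<bar>grad (corrector T a \<xi>) z i\<bar> + 1)))"
proof -
  define C where "C n = (real n + 1) * 2 ^ n * (1 + ((\<beta> - \<alpha>) / (\<alpha> / \<beta>)) ^ n) / (\<alpha> / \<beta>)\<^sup>2" for n
  have C: "0 < C n" for n using assms by (simp add: C_def add_pos_nonneg)
  have C': "0 < \<beta> / \<alpha> + 1" using assms by (simp add: add_pos_nonneg)
  note derivative = corrector_cond_upd_has_derivative[where \<beta>=\<beta>, OF assms(1)]
  note power_bound = corrector_power_deriv_bound[where \<beta>=\<beta>, OF assms(1), folded C_def]
  note grad_bound = corrector_grad_cond_upd_bound[where \<beta>=\<beta>, OF assms(1)]
  show ?thesis
    apply (intro conjI allI impI)
    subgoal using derivative by blast
    subgoal for n by (intro exI[of _ "C n"] conjI C allI impI ballI power_bound; simp)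
    subgoal by (intro exI[of _ "\<beta> / \<alpha> + 1"] conjI C' allI impI ballI grad_bound; simp)
    done
qed

end
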